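(* Let $\omega\in\Omega$ with $\beta_1<1$, $E=E^\omega$, let $N\ge1$, $a\in\{\pm\frac12\}$, and let $(n_1,a_1)$ be a level with $2n_1+a_1\le2N+a$. Then for $1\le l\le n_1$, \[\Psi^{n_1,a_1}_{n_1-l}(s)=\frac{W^{(a_1,-1/2)}(s)}{\pi}\int_{-1}^1E(x)\mathsf{J}^{(a_1,-1/2)}_s(x)(x-1)^{n_1-l}(1-x)^{a_1}(1+x)^{-1/2}dx,\] and for $n_1<l\le N$, \[\Psi^{n_1,a_1}_{n_1-l}(s)=\frac{W^{(a_1,-1/2)}(s)}{\pi}\int_{-1}^1\frac{E(x)-\sum_{j=0}^{l-n_1-1}\frac{E^{(j)}(1)}{j!}(x-1)^j}{(x-1)^{l-n_1}}\,\mathsf{J}^{(a_1,-1/2)}_s(x)(1-x)^{a_1}(1+x)^{-1/2}dx .\]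
   Context: $\mathsf{J}^{(-1/2,-1/2)}_s(\cos\theta)=\cos s\theta$, $\mathsf{J}^{(1/2,-1/2)}_s(\cos\theta)=\sin((s+\frac12)\theta)/\sin(\theta/2)$; $W^{(-1/2,-1/2)}(0)=1$, $W^{(-1/2,-1/2)}(s)=2$ ($s>0$), $W^{(1/2,-1/2)}\equiv1$. $\Omega$: triples $(\alpha,\beta,\delta)$, $\alpha_1\ge\alpha_2\ge\dots\ge0$, $\beta_1\ge\beta_2\ge\dots\ge0$, $\sum(\alpha_i+\beta_i)\le\delta$, $\gamma=\delta-\sum(\alpha_i+\beta_i)$, $E^\omega(x)=e^{\gamma(x-1)}\prod_i\frac{1-\beta_i(1-x)+\beta_i^2(1-x)/2}{1+\alpha_i(1-x)+\alpha_i^2(1-x)/2}$. Levels $(n,b)$, $n\ge1$, $b\in\{\pm\frac12\}$, ordered by $2n+b$. Matrices on $\mathbb{Z}_{\ge0}\times\mathbb{Z}_{\ge0}$: $\mathcal{T}(x,y)=0$ if $x<y$, $1$ if $x\ge y=0$, $2$ if $x\ge y>0$; $\phi(x,y)=\mathbf 1[x>y]$; product $(f*g)(x,y)=\sum_{z\ge0}f(x,z)g(z,y)$. For $2n_1+b_1<2n_2+b_2$: $\phi^{(n_1,b_1),(n_2,b_2)}=(\mathcal{T}*\phi)^{n_2-n_1}*\mathcal{T}$ if $(b_1,b_2)=(-\frac12,\frac12)$; $(\mathcal{T}*\phi)^{n_2-n_1}$ if $(\frac12,\frac12)$; $(\phi*\mathcal{T})^{n_2-n_1-1}*\phi$ if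 $(\frac12,-\frac12)$; $(\phi*\mathcal{T})^{n_2-n_1}$ if $(-\frac12,-\frac12)$. Functions: $\Psi^{N,a}_{N-l}(s)=\frac{W^{(a,-1/2)}(s)}\pi\int_{-1}^1E(x)\mathsf{J}^{(a,-1/2)}_s(x)(x-1)^{N-l}(1-x)^a(1+x)^{-1/2}dx$ for $1\le l\le N$, $s\ge0$; for a level $(n,b)$ with $2n+b<2N+a$ and $1\le l\le N$, $\Psi^{n,b}_{n-l}(s)=\sum_{z\ge0}\Psi^{N,a}_{N-l}(z)\,\phi^{(n,b),(N,a)}(z,s)$; for $(n,b)=(N,a)$ it is $\Psi^{N,a}_{N-l}$ itself. *)

theory Defs
  imports "HOL-Analysis.Analysis"
begin

definition Jac :: "real \<Rightarrow> nat \<Rightarrow> real \<Rightarrow> real" where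
  "Jac a s x =
     (if a = -1/2 then cos (real s * arccos x)
      else (if arccos x = 0 then 2 * real s + 1
            else sin ((real s + 1/2) * arccos x) / sin (arccos x / 2)))"

definition Wt :: "real \<Rightarrow> nat \<Rightarrow> real" where
  "Wt a s = (if a = -1/2 then (if s = 0 then 1 else 2) else 1)"

text \<open>Sequences alpha_1 \<ge> alpha_2 \<ge> ... are indexed from 0 here (alpha 0 = alpha_1).\<close>
definition in_Omega :: "(nat \<Rightarrow> real) \<Rightarrow> (nat \<Rightarrow> real) \<Rightarrow> real \<Rightarrow> bool" where
  "in_Omega \<alpha> \<beta> \<delta> \<longleftrightarrow>
     (\<forall>i. \<alpha> (Suc i) \<le> \<alpha> i) \<and> (\<forall>i. 0 \<le> \<alpha> i) \<and>
     (\<forall>i. \<beta> (Suc i) \<le> \<beta> i) \<and> (\<forall>i. 0 \<le> \<beta> i) \<and>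
     summable (\<lambda>i. \<alpha> i + \<beta> i) \<and> (\<Sum>i. \<alpha> i + \<beta> i) \<le> \<delta>"

definition Eomega :: "(nat \<Rightarrow> real) \<Rightarrow> (nat \<Rightarrow> real) \<Rightarrow> real \<Rightarrow> real \<Rightarrow> real" where
  "Eomega \<alpha> \<beta> \<delta> x =
     (let \<gamma> = \<delta> - (\<Sum>i. \<alpha> i + \<beta> i) in
      exp (\<gamma> * (x - 1)) *
      (\<Prod>i. (1 - \<beta> i * (1 - x) + (\<beta> i)\<^sup>2 * (1 - x) / 2)
             / (1 + \<alpha> i * (1 - x) + (\<alpha> i)\<^sup>2 * (1 - x) / 2)))"

definition Tm :: "nat \<Rightarrow> nat \<Rightarrow> real" where
  "Tm x y = (if x < y then 0 else if y = 0 then 1 else 2)"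

definition phim :: "nat \<Rightarrow> nat \<Rightarrow> real" where
  "phim x y = (if x > y then 1 else 0)"

definition mmul :: "(nat \<Rightarrow> nat \<Rightarrow> real) \<Rightarrow> (nat \<Rightarrow> nat \<Rightarrow> real) \<Rightarrow> nat \<Rightarrow> nat \<Rightarrow> real" where
  "mmul f g x y = (\<Sum>z. f x z * g z y)"

definition mid :: "nat \<Rightarrow> nat \<Rightarrow> real" where
  "mid x y = (if x = y then 1 else 0)"

fun mpow :: "(nat \<Rightarrow> nat \<Rightarrow> real) \<Rightarrow> nat \<Rightarrow> nat \<Rightarrow> nat \<Rightarrow> real" where
  "mpow f 0 = mid"
| "mpow f (Suc k) = mmul (mpow f k) f"

text \<open>Levels (n,b) with n \<ge> 1, b \<in> {1/2,-1/2}; ordered by 2n+b.\<close>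
definition is_level :: "nat \<Rightarrow> real \<Rightarrow> bool" where
  "is_level n b \<longleftrightarrow> n \<ge> 1 \<and> (b = 1/2 \<or> b = -1/2)"

definition phiLev :: "nat \<Rightarrow> real \<Rightarrow> nat \<Rightarrow> real \<Rightarrow> nat \<Rightarrow> nat \<Rightarrow> real" where
  "phiLev n1 b1 n2 b2 =
     (if b1 = -1/2 \<and> b2 = 1/2 then mmul (mpow (mmul Tm phim) (n2 - n1)) Tm
      else if b1 = 1/2 \<and> b2 = 1/2 then mpow (mmul Tm phim) (n2 - n1)
      else if b1 = 1/2 \<and> b2 = -1/2 then mmul (mpow (mmul phim Tm) (n2 - n1 - 1)) phim
      else mpow (mmul phim Tm) (n2 - n1))"

text \<open>PsiTop E N a l s = Psi^{N,a}_{N-l}(s).\<close>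
definition PsiTop :: "(real \<Rightarrow> real) \<Rightarrow> nat \<Rightarrow> real \<Rightarrow> nat \<Rightarrow> nat \<Rightarrow> real" where
  "PsiTop E N a l s = Wt a s / pi *
     integral {-1..1} (\<lambda>x. E x * Jac a s x * (x - 1) ^ (N - l)
                             * (1 - x) powr a * (1 + x) powr (-1/2))"

text \<open>Psi E N a n b l s = Psi^{n,b}_{n-l}(s) (defined via the top level (N,a)).\<close>
definition Psi :: "(real \<Rightarrow> real) \<Rightarrow> nat \<Rightarrow> real \<Rightarrow> nat \<Rightarrow> real \<Rightarrow> nat \<Rightarrow> nat \<Rightarrow> real" where
  "Psi E N a n b l s =
     (if n = N \<and> b = a then PsiTop E N a l s
      else (\<Sum>z. PsiTop E N a l z * phiLev n b N a z s))"

end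

theory Submission
  imports Defs "HOL-Complex_Analysis.Complex_Analysis"
begin

text \<open>The function \<open>E\<^sup>\<omega>\<close> extends holomorphically to a neighbourhood of \<open>[-1, 1]\<close>, so by a
  contour shift the cosine coefficients of \<open>E\<^sup>\<omega>(cos t)\<close>, and of every difference quotient
  built from it, decay geometrically.  On these coefficients the matrix \<open>T\<close> is a telescoping sum
  turning Jacobi coefficients of type \<open>(1/2, -1/2)\<close> into type \<open>(-1/2, -1/2)\<close>, and \<open>\<phi>\<close> turns
  type \<open>(-1/2, -1/2)\<close> coefficients of \<open>g\<close> into type \<open>(1/2, -1/2)\<close> coefficients of
  \<open>(g - g(1)) / (x - 1)\<close>, because multiplication by \<open>x - 1\<close> is a second difference on cosine
  coefficients.  Geometric decay makes the matrix products associative, so \<open>\<Psi>\<^bsup>n1,a1\<^esup>\<close> is the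
  Jacobi coefficient of the \<open>(N - n1)\<close>-fold difference quotient at \<open>1\<close> of \<open>E(x) (x - 1)\<^bsup>N-l\<^esup>\<close>.
  This quotient is \<open>E(x) (x - 1)\<^bsup>n1-l\<^esup>\<close> if \<open>l \<le> n1\<close>, and the normalised Taylor remainder of
  \<open>E\<close> at \<open>1\<close> of order \<open>l - n1\<close> otherwise.\<close>

section \<open>Geometric decay of Chebyshev coefficients\<close>

definition nbhd_interval :: "complex set \<Rightarrow> bool" where
  "nbhd_interval U \<longleftrightarrow> open U \<and> of_real ` {-1..1} \<subseteq> U"

definition re_trace :: "(complex \<Rightarrow> complex) \<Rightarrow> real \<Rightarrow> real" where
  "re_trace G x = Re (G (of_real x))"

lemma nbhd_interval_of_real:
  assumes "nbhd_interval U" "x \<in> {-1..1}"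
  shows "of_real x \<in> U"
  using assms by (auto simp: nbhd_interval_def)

lemma nbhd_interval_one: "nbhd_interval U \<Longrightarrow> 1 \<in> U"
  using nbhd_interval_of_real[of U 1] by simp

lemma continuous_on_re_trace:
  assumes "G holomorphic_on U" "nbhd_interval U"
  shows "continuous_on {-1..1} (re_trace G)"
proof -
  have "continuous_on (of_real ` {-1..1}) G"
    using assms by (auto simp: nbhd_interval_def intro: continuous_on_subset holomorphic_on_imp_continuous_on)
  hence "continuous_on {-1..1} (\<lambda>x. G (of_real x))"
    by (rule continuous_on_compose2[OF _ continuous_on_of_real[OF continuous_on_id]]) auto
  thus ?thesis unfolding re_trace_def by (intro continuous_intros)
qed

lemma contour_integrable_linepath_convex:
  assumes "H holomorphic_on S" "convex S" "u \<in> S" "v \<in> S"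
  shows "H contour_integrable_on linepath u v"
  by (rule contour_integrable_continuous_linepath,
      rule continuous_on_subset[OF holomorphic_on_imp_continuous_on[OF assms(1)]],
      rule closed_segment_subset[OF assms(3,4,2)])

lemma Im_closed_segment_const:
  assumes "Im u = c" "Im v = c" "w \<in> closed_segment u v"
  shows "Im w = c"
proof -
  obtain t where "w = (1 - t) *\<^sub>R u + t *\<^sub>R v" using assms(3) by (auto simp: closed_segment_def)
  hence "Im w = (1 - t) * Im u + t * Im v" by simp
  thus ?thesis using assms(1,2) by (simp add: algebra_simps)
qed

lemma contour_integral_linepath_periodic_shift:
  fixes H :: "complex \<Rightarrow> complex"
  assumes hol: "H holomorphic_on S" and S: "convex S"
    and corners: "a \<in> S" "a + p \<in> S" "a + h \<in> S" "a + p + h \<in> S"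
    and per: "\<And>w. H (w + p) = H w"
  shows "contour_integral (linepath a (a + p)) H = contour_integral (linepath (a + h) (a + p + h)) H"
proof -
  note ci = contour_integrable_linepath_convex[OF hol S]
  define g where "g = linepath a (a + p) +++ (linepath (a + p) (a + p + h)
      +++ (linepath (a + p + h) (a + h) +++ linepath (a + h) a))"
  have "(H has_contour_integral 0) g"
    by (rule Cauchy_theorem_convex_simple[OF hol S])
       (use closed_segment_subset[OF _ _ S] corners in \<open>auto simp: g_def path_image_join\<close>)
  moreover have "(H has_contour_integral
      (contour_integral (linepath a (a + p)) H + (contour_integral (linepath (a + p) (a + p + h)) H
      + (contour_integral (linepath (a + p + h) (a + h)) H + contour_integral (linepath (a + h) a) H)))) g"
    unfolding g_def
    by (intro has_contour_integral_join has_contour_integral_integral ci corners valid_path_join) auto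
  moreover have "contour_integral (linepath (a + p) (a + p + h)) H = contour_integral (linepath a (a + h)) H"
  proof -
    have "H (linepath (a + p) (a + p + h) t) = H (linepath a (a + h) t)" for t
      using per[of "linepath a (a + h) t"] by (simp add: linepath_def algebra_simps)
    thus ?thesis by (simp add: contour_integral_integral)
  qed
  moreover have "contour_integral (linepath (a + h) a) H = - contour_integral (linepath a (a + h)) H"
    "contour_integral (linepath (a + p + h) (a + h)) H = - contour_integral (linepath (a + h) (a + p + h)) H"
    using contour_integral_reversepath[of "linepath a (a + h)" H]
      contour_integral_reversepath[of "linepath (a + h) (a + p + h)" H] by simp_all
  ultimately show ?thesis
    using has_contour_integral_unique by fastforce
qed

lemma holomorphic_on_cos_strip:
  assumes hol: "G holomorphic_on U" and U: "nbhd_interval U"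
  obtains \<epsilon> where "\<epsilon> > 0" "(\<lambda>w. G (cos w)) holomorphic_on {w. \<bar>Re w\<bar> < 4 \<and> \<bar>Im w\<bar> < \<epsilon>}"
proof -
  define A where "A = cos -` U"
  have "open A"
    unfolding A_def by (rule open_vimage) (use U in \<open>auto simp: nbhd_interval_def intro!: continuous_on_cos continuous_on_id\<close>)
  moreover have "of_real ` {-4..4} \<subseteq> A"
    using nbhd_interval_of_real[OF U] by (auto simp: A_def cos_of_real)
  moreover have "compact (of_real ` {-4..4} :: complex set)"
    by (intro compact_continuous_image continuous_intros) auto
  ultimately obtain \<epsilon> where \<epsilon>: "\<epsilon> > 0" "(\<Union>x\<in>of_real ` {-4..4}. ball x \<epsilon>) \<subseteq> A"
    using compact_subset_open_imp_ball_epsilon_subset by metis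
  have "{w. \<bar>Re w\<bar> < 4 \<and> \<bar>Im w\<bar> < \<epsilon>} \<subseteq> A"
  proof
    fix w assume w: "w \<in> {w. \<bar>Re w\<bar> < 4 \<and> \<bar>Im w\<bar> < \<epsilon>}"
    have "w \<in> ball (of_real (Re w)) \<epsilon>"
      using w by (simp add: dist_norm cmod_def power2_eq_square complex_eq_iff abs_less_iff)
    thus "w \<in> A" using w \<epsilon>(2) by force
  qed
  hence "(G \<circ> cos) holomorphic_on {w. \<bar>Re w\<bar> < 4 \<and> \<bar>Im w\<bar> < \<epsilon>}"
    by (intro holomorphic_on_compose_gen[OF _ hol]) (auto simp: A_def intro: holomorphic_intros)
  thus ?thesis using that \<epsilon>(1) by (simp add: o_def)
qed

text \<open>Shifting the integration path from \<open>[-\<pi>, \<pi>]\<close> to \<open>[-\<pi>, \<pi>] + \<i>\<eta>\<close> multiplies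
  the exponential factor by \<open>e\<^sup>-\<^sup>\<eta>\<^sup>s\<close>.\<close>
lemma periodic_fourier_integral_bound:
  fixes K :: "complex \<Rightarrow> complex" and \<eta> :: real
  assumes hol: "K holomorphic_on S" and cS: "convex S"
    and corners: "- of_real pi \<in> S" "of_real pi \<in> S" "- of_real pi + \<i> * of_real \<eta> \<in> S"
      "of_real pi + \<i> * of_real \<eta> \<in> S"
    and per: "\<And>w. K (w + 2 * of_real pi) = K w"
    and M: "\<And>w. w \<in> closed_segment (- of_real pi + \<i> * of_real \<eta>) (of_real pi + \<i> * of_real \<eta>)
      \<Longrightarrow> norm (K w) \<le> M"
  shows "\<exists>I. ((\<lambda>t. K (of_real t) * exp (\<i> * of_nat s * of_real t)) has_integral I) {-pi..pi}
    \<and> norm I \<le> M * (2 * pi) * exp (- \<eta>) ^ s"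
proof -
  define a h p :: complex where "a = - of_real pi" and "h = \<i> * of_real \<eta>" and "p = 2 * of_real pi"
  have corners: "a \<in> S" "a + p \<in> S" "a + h \<in> S" "a + p + h \<in> S"
    using corners by (simp_all add: a_def h_def p_def)
  have M: "norm (K w) \<le> M" if "w \<in> closed_segment (a + h) (a + p + h)" for w
    using M that by (simp add: a_def h_def p_def)
  define H where "H = (\<lambda>w. K w * exp (\<i> * of_nat s * w))"
  have holH: "H holomorphic_on S" unfolding H_def by (intro holomorphic_intros hol)
  have "H (w + p) = H w" for w
  proof -
    have "exp (\<i> * of_nat s * (w + p)) = exp (\<i> * of_nat s * w) * exp (2 * of_real pi * \<i>) ^ s"
      by (simp add: p_def exp_add exp_of_nat_mult[symmetric] algebra_simps)
    thus ?thesis using per[of w] by (simp add: H_def p_def)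
  qed
  hence shift: "contour_integral (linepath a (a + p)) H = contour_integral (linepath (a + h) (a + p + h)) H"
    using contour_integral_linepath_periodic_shift[of H S a p h] holH cS corners by blast
  note ci = contour_integrable_linepath_convex[OF holH cS]
  have "((\<lambda>t. H (of_real t)) has_integral contour_integral (linepath a (a + p)) H) {-pi..pi}"
    using has_contour_integral_integral[OF ci[OF corners(1,2)]]
    by (subst (asm) has_contour_integral_linepath_Reals_iff) (auto simp: a_def p_def)
  moreover have "norm (contour_integral (linepath (a + h) (a + p + h)) H)
      \<le> M * exp (- \<eta>) ^ s * norm ((a + p + h) - (a + h))"
  proof (rule has_contour_integral_bound_linepath[OF has_contour_integral_integral[OF ci[OF corners(3,4)]]])
    show "0 \<le> M * exp (- \<eta>) ^ s" using order_trans[OF norm_ge_zero M[of "a + h"]] by simp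
    fix w assume w: "w \<in> closed_segment (a + h) (a + p + h)"
    hence "Im w = \<eta>" by (rule Im_closed_segment_const[rotated 2]) (simp_all add: a_def h_def p_def)
    hence "norm (exp (\<i> * of_nat s * w)) = exp (- \<eta>) ^ s"
      by (simp add: exp_of_nat_mult[symmetric])
    thus "norm (H w) \<le> M * exp (- \<eta>) ^ s"
      using M[OF w] by (simp add: H_def norm_mult mult_right_mono)
  qed
  ultimately show ?thesis
    unfolding shift by (intro exI[of _ "contour_integral (linepath (a + h) (a + p + h)) H"])
      (simp add: H_def p_def mult_ac)
qed

lemma fourier_integral_cos_decay:
  assumes hol: "G holomorphic_on U" and U: "nbhd_interval U"
  obtains M \<eta> where "\<eta> > 0" "\<And>s::nat. \<exists>I.
      ((\<lambda>t. G (of_real (cos t)) * exp (\<i> * of_nat s * of_real t)) has_integral I) {-pi..pi}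
      \<and> norm I \<le> M * exp (- \<eta>) ^ s"
proof -
  obtain \<epsilon> where \<epsilon>: "\<epsilon> > 0" and holGc: "(\<lambda>w. G (cos w)) holomorphic_on {w. \<bar>Re w\<bar> < 4 \<and> \<bar>Im w\<bar> < \<epsilon>}"
    using holomorphic_on_cos_strip[OF hol U] by blast
  define S where "S = {w. \<bar>Re w\<bar> < 4 \<and> \<bar>Im w\<bar> < \<epsilon>}"
  have "S = {w. Re w < 4} \<inter> {w. Re w > -4} \<inter> {w. Im w < \<epsilon>} \<inter> {w. Im w > -\<epsilon>}"
    by (auto simp: S_def abs_less_iff)
  hence cS: "convex S"
    by (simp add: convex_Int convex_halfspace_Re_lt convex_halfspace_Re_gt
        convex_halfspace_Im_lt convex_halfspace_Im_gt)
  define \<eta> where "\<eta> = \<epsilon> / 2"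
  have corners: "- of_real pi \<in> S" "of_real pi \<in> S" "- of_real pi + \<i> * of_real \<eta> \<in> S"
      "of_real pi + \<i> * of_real \<eta> \<in> S"
    using pi_less_4 pi_gt3 \<epsilon> by (auto simp: S_def \<eta>_def)
  have "closed_segment (- of_real pi + \<i> * of_real \<eta>) (of_real pi + \<i> * of_real \<eta>) \<subseteq> S"
    by (rule closed_segment_subset[OF corners(3,4) cS])
  hence "compact ((\<lambda>w. G (cos w)) ` closed_segment (- of_real pi + \<i> * of_real \<eta>) (of_real pi + \<i> * of_real \<eta>))"
    by (intro compact_continuous_image continuous_on_subset[OF holomorphic_on_imp_continuous_on[OF holGc[folded S_def]]])
       simp_all
  then obtain M where M: "\<And>w. w \<in> closed_segment (- of_real pi + \<i> * of_real \<eta>) (of_real pi + \<i> * of_real \<eta>)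
      \<Longrightarrow> norm (G (cos w)) \<le> M"
    using compact_imp_bounded bounded_pos by (metis image_eqI)
  have per: "G (cos (w + 2 * of_real pi)) = G (cos w)" for w by (simp add: cos_add)
  show ?thesis
  proof (rule that[of \<eta> "M * (2 * pi)"])
    show "\<eta> > 0" using \<epsilon> by (simp add: \<eta>_def)
    show "\<exists>I. ((\<lambda>t. G (of_real (cos t)) * exp (\<i> * of_nat s * of_real t)) has_integral I) {-pi..pi}
        \<and> norm I \<le> M * (2 * pi) * exp (- \<eta>) ^ s" for s :: nat
      using periodic_fourier_integral_bound[of "\<lambda>w. G (cos w)" S, OF holGc[folded S_def] cS corners per M] by (simp add: cos_of_real)
  qed
qed

definition cheb_coeff :: "(real \<Rightarrow> real) \<Rightarrow> nat \<Rightarrow> real" where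
  "cheb_coeff g s = integral {0..pi} (\<lambda>t. g (cos t) * cos (real s * t)) / pi"

lemma Re_mult_exp_add_reflect:
  fixes z :: complex
  shows "Re (z * exp (\<i> * of_nat s * of_real x)) + Re (z * exp (\<i> * of_nat s * of_real (- x)))
       = 2 * Re z * cos (real s * x)"
proof -
  have "exp (\<i> * of_nat s * of_real x) = cis (real s * x)"
    "exp (\<i> * of_nat s * of_real (- x)) = cis (- (real s * x))"
    by (simp_all add: cis_conv_exp mult_ac)
  thus ?thesis by (simp add: cis.ctr)
qed

lemma cheb_coeff_decay:
  assumes "G holomorphic_on U" "nbhd_interval U"
  obtains C \<rho> where "0 < \<rho>" "\<rho> < 1" "\<And>s. \<bar>cheb_coeff (re_trace G) s\<bar> \<le> C * \<rho> ^ s"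
proof -
  obtain M \<eta> where \<eta>: "\<eta> > 0" and MI: "\<And>s::nat. \<exists>I.
      ((\<lambda>t. G (of_real (cos t)) * exp (\<i> * of_nat s * of_real t)) has_integral I) {-pi..pi}
      \<and> norm I \<le> M * exp (- \<eta>) ^ s"
    using fourier_integral_cos_decay[OF assms] by blast
  show ?thesis
  proof (rule that[of "exp (- \<eta>)" "M / (2 * pi)"])
    show "0 < exp (- \<eta>)" "exp (- \<eta>) < 1" using \<eta> by simp_all
    fix s :: nat
    define f where "f = (\<lambda>t. G (of_real (cos t)) * exp (\<i> * of_nat s * of_real t))"
    obtain I where hI: "(f has_integral I) {-pi..pi}" and nI: "norm I \<le> M * exp (- \<eta>) ^ s"
      using MI[of s] unfolding f_def by blast
    have "f integrable_on {-pi..0}" "f integrable_on {0..pi}"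
      using hI by (auto intro: integrable_subinterval_real[of f "-pi" pi] simp: has_integral_integrable)
    then obtain I1 I2 where h1: "(f has_integral I1) {-pi..0}" and h2: "(f has_integral I2) {0..pi}"
      by blast
    have "(f has_integral (I1 + I2)) {-pi..pi}"
      by (rule has_integral_combine[OF _ _ h1 h2]) auto
    hence "I = I1 + I2" using hI has_integral_unique by blast
    moreover have "((\<lambda>t. f (- t)) has_integral I1) {-0..-(-pi)}"
      using h1 by (subst has_integral_reflect_real)
    ultimately have "((\<lambda>t. Re (f t + f (- t))) has_integral Re I) {0..pi}"
      using has_integral_linear[OF has_integral_add[OF h2] bounded_linear_Re]
      by (fastforce simp: o_def add.commute)
    moreover have "Re (f t + f (- t)) = 2 * (re_trace G (cos t) * cos (real s * t))" for t
      using Re_mult_exp_add_reflect[of "G (of_real (cos t))" s t] by (simp add: f_def re_trace_def)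
    ultimately have "((\<lambda>t. re_trace G (cos t) * cos (real s * t)) has_integral Re I / 2) {0..pi}"
      using has_integral_cmul[of _ "Re I" "{0..pi}" "1/2"] by fastforce
    hence "cheb_coeff (re_trace G) s = Re I / (2 * pi)"
      by (simp add: cheb_coeff_def integral_unique)
    moreover have "\<bar>Re I\<bar> \<le> M * exp (- \<eta>) ^ s"
      using nI abs_Re_le_cmod order_trans by blast
    ultimately show "\<bar>cheb_coeff (re_trace G) s\<bar> \<le> M / (2 * pi) * exp (- \<eta>) ^ s"
      using pi_gt_zero by (simp add: divide_le_eq)
  qed
qed

lemma cheb_coeff_tendsto_zero:
  assumes "G holomorphic_on U" "nbhd_interval U"
  shows "cheb_coeff (re_trace G) \<longlonglongrightarrow> 0"
proof -
  obtain C \<rho> where r: "0 < \<rho>" "\<rho> < 1" "\<And>s. \<bar>cheb_coeff (re_trace G) s\<bar> \<le> C * \<rho> ^ s"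
    using cheb_coeff_decay[OF assms] by blast
  have "(\<lambda>s. C * \<rho> ^ s) \<longlonglongrightarrow> 0"
    using tendsto_mult_right_zero[OF LIMSEQ_power_zero[of \<rho>]] r by simp
  thus ?thesis
    by (rule Lim_null_comparison[rotated]) (use r in \<open>simp add: always_eventually\<close>)
qed

section \<open>Jacobi coefficients\<close>

lemma continuous_on_cos_comp:
  "continuous_on {-1..1} g \<Longrightarrow> continuous_on {0..pi} (\<lambda>t. g (cos t))"
  by (rule continuous_on_compose2[of "{-1..1}" g, OF _ continuous_on_cos[OF continuous_on_id]]) auto

lemma continuous_on_cos_comp_mult_cos:
  "continuous_on {-1..1} g \<Longrightarrow> continuous_on {0..pi} (\<lambda>t. g (cos t) * cos (real s * t))"
  by (intro continuous_on_mult continuous_on_cos_comp continuous_on_cos continuous_on_const continuous_on_id)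

lemma continuous_on_mult_cos_arccos:
  "continuous_on {-1..1} g \<Longrightarrow> continuous_on {-1..1} (\<lambda>x. g x * cos (c * arccos x))"
  by (intro continuous_on_mult continuous_on_cos continuous_on_arccos continuous_on_id
      continuous_on_const) auto

lemma has_integral_arccos_substitution:
  assumes cg: "continuous_on {-1..1} g"
  shows "((\<lambda>x. g x / sqrt (1 - x\<^sup>2)) has_integral integral {0..pi} (\<lambda>t. g (cos t))) {-1..1}"
proof -
  define k where "k = (\<lambda>t. g (cos t))"
  have ck: "continuous_on {0..pi} k" unfolding k_def by (rule continuous_on_cos_comp[OF cg])
  define \<Phi> where "\<Phi> = (\<lambda>u. integral {0..u} k)"
  have cPhi: "continuous_on {0..pi} \<Phi>" unfolding \<Phi>_def
    by (rule indefinite_integral_continuous_1) (rule integrable_continuous_interval[OF ck])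
  have cPhi_arccos: "continuous_on {-1..1} (\<lambda>x. \<Phi> (arccos x))"
    by (rule continuous_on_compose2[OF cPhi])
       (auto intro!: continuous_on_arccos continuous_on_id arccos_lbound arccos_ubound)
  have dPhi_arccos: "((\<lambda>x. \<Phi> (arccos x)) has_vector_derivative (- (g x / sqrt (1 - x\<^sup>2)))) (at x)"
    if x: "x \<in> {-1<..<1}" for x
  proof -
    have th: "0 < arccos x" "arccos x < pi" using arccos_lt_bounded[of x] x by auto
    have "(\<Phi> has_vector_derivative k (arccos x)) (at (arccos x) within {0<..<pi})"
      unfolding \<Phi>_def
      by (rule has_vector_derivative_within_subset[OF integral_has_vector_derivative[OF ck]]) (use th in auto)
    hence "(\<Phi> has_vector_derivative k (arccos x)) (at (arccos x))"
      using th by (subst (asm) has_vector_derivative_within_open) auto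
    moreover have "k (arccos x) = g x" using x by (simp add: k_def)
    ultimately have "(\<Phi> has_real_derivative g x) (at (arccos x))"
      by (simp add: has_real_derivative_iff_has_vector_derivative)
    from DERIV_chain2[OF this DERIV_arccos[of x]] show ?thesis
      using x by (simp add: has_real_derivative_iff_has_vector_derivative divide_inverse)
  qed
  have "((\<lambda>x. - (g x / sqrt (1 - x\<^sup>2))) has_integral (\<Phi> (arccos 1) - \<Phi> (arccos (-1)))) {-1..1}"
    by (rule fundamental_theorem_of_calculus_interior[OF _ cPhi_arccos dPhi_arccos]) auto
  from has_integral_neg[OF this] show ?thesis by (simp add: \<Phi>_def k_def)
qed

definition jacobi_coeff :: "(real \<Rightarrow> real) \<Rightarrow> real \<Rightarrow> nat \<Rightarrow> real" where
  "jacobi_coeff g b s = Wt b s / pi *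
     integral {-1..1} (\<lambda>x. g x * Jac b s x * (1 - x) powr b * (1 + x) powr (-1/2))"

lemma powr_minus_half: "0 \<le> y \<Longrightarrow> y powr (-1/2) = 1 / sqrt (y::real)"
  using powr_minus_divide[of y "1/2"] by (simp add: powr_half_sqrt)

lemma jacobi_weight_minus_half:
  fixes x :: real assumes "-1 < x" "x < 1"
  shows "(1 - x) powr (-1/2) * (1 + x) powr (-1/2) = 1 / sqrt (1 - x\<^sup>2)"
proof -
  have "sqrt (1 - x) * sqrt (1 + x) = sqrt (1 - x\<^sup>2)"
    by (simp add: real_sqrt_mult[symmetric] power2_eq_square algebra_simps)
  moreover have "(1 - x) powr (-1/2) = 1 / sqrt (1 - x)" "(1 + x) powr (-1/2) = 1 / sqrt (1 + x)"
    using assms by (simp_all only: powr_minus_half)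
  ultimately show ?thesis by simp
qed

text \<open>With \<open>x = cos \<theta>\<close>, this is \<open>2 sin((s + 1/2)\<theta>) sin(\<theta>/2) = cos(s\<theta>) - cos((s+1)\<theta>)\<close>.\<close>
lemma jacobi_weight_plus_half:
  fixes x :: real assumes x: "-1 < x" "x < 1"
  shows "Jac (1/2) s x * (1 - x) powr (1/2) * (1 + x) powr (-1/2)
       = (cos (real s * arccos x) - cos (real (Suc s) * arccos x)) / sqrt (1 - x\<^sup>2)"
proof -
  define \<theta> where "\<theta> = arccos x"
  have th: "0 < \<theta>" "\<theta> < pi" using arccos_lt_bounded[of x] x by (auto simp: \<theta>_def)
  have sn: "sin (\<theta> / 2) > 0" using th by (intro sin_gt_zero) auto
  have J: "Jac (1/2) s x = sin ((real s + 1/2) * \<theta>) / sin (\<theta> / 2)"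
    using th by (simp add: Jac_def \<theta>_def)
  have w: "(1 - x) powr (1/2) * (1 + x) powr (-1/2) = (1 - x) / sqrt (1 - x\<^sup>2)"
  proof -
    have "sqrt (1 - x\<^sup>2) = sqrt (1 - x) * sqrt (1 + x)"
      by (simp add: real_sqrt_mult[symmetric] power2_eq_square algebra_simps)
    moreover have "sqrt (1 - x) * sqrt (1 - x) = 1 - x" using x by simp
    moreover have "(1 + x) powr (-1/2) = 1 / sqrt (1 + x)" using x by (simp only: powr_minus_half)
    ultimately show ?thesis using x by (simp add: powr_half_sqrt field_simps)
  qed
  have "x = cos (2 * (\<theta> / 2))" using x by (simp add: \<theta>_def)
  hence c: "1 - x = 2 * (sin (\<theta> / 2))\<^sup>2" unfolding cos_double_sin by simp
  have "cos (real s * \<theta>) = cos ((real s + 1/2) * \<theta> - \<theta> / 2)"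
    "cos (real (Suc s) * \<theta>) = cos ((real s + 1/2) * \<theta> + \<theta> / 2)" by (simp_all add: algebra_simps)
  hence pr: "2 * sin ((real s + 1/2) * \<theta>) * sin (\<theta> / 2) = cos (real s * \<theta>) - cos (real (Suc s) * \<theta>)"
    by (simp add: cos_diff cos_add)
  have "Jac (1/2) s x * (1 - x) = 2 * sin ((real s + 1/2) * \<theta>) * sin (\<theta> / 2)"
    unfolding J c using sn by (simp add: power2_eq_square field_simps)
  thus ?thesis using w pr by (simp add: \<theta>_def mult.assoc)
qed

lemma jacobi_coeff_minus_half:
  assumes cg: "continuous_on {-1..1} g"
  shows "jacobi_coeff g (-1/2) s = Wt (-1/2) s * cheb_coeff g s"
proof -
  have "integral {-1..1} (\<lambda>x. g x * Jac (-1/2) s x * (1 - x) powr (-1/2) * (1 + x) powr (-1/2))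
      = integral {-1..1} (\<lambda>x. g x * cos (real s * arccos x) / sqrt (1 - x\<^sup>2))"
  proof (rule integral_spike[of "{-1,1}"])
    fix x assume "x \<in> {-1..1::real} - {-1, 1}"
    thus "g x * cos (real s * arccos x) / sqrt (1 - x\<^sup>2)
        = g x * Jac (-1/2) s x * (1 - x) powr (-1/2) * (1 + x) powr (-1/2)"
      using jacobi_weight_minus_half[of x] by (simp add: Jac_def mult.assoc)
  qed simp
  also have "\<dots> = integral {0..pi} (\<lambda>t. g (cos t) * cos (real s * arccos (cos t)))"
    by (rule integral_unique, rule has_integral_arccos_substitution,
        rule continuous_on_mult_cos_arccos[OF cg])
  also have "\<dots> = integral {0..pi} (\<lambda>t. g (cos t) * cos (real s * t))"
    by (rule integral_cong) (simp add: arccos_cos)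
  finally show ?thesis by (simp add: jacobi_coeff_def cheb_coeff_def)
qed

lemma jacobi_coeff_plus_half:
  assumes cg: "continuous_on {-1..1} g"
  shows "jacobi_coeff g (1/2) s = cheb_coeff g s - cheb_coeff g (Suc s)"
proof -
  have "integral {-1..1} (\<lambda>x. g x * Jac (1/2) s x * (1 - x) powr (1/2) * (1 + x) powr (-1/2))
      = integral {-1..1} (\<lambda>x. (g x * cos (real s * arccos x) - g x * cos (real (Suc s) * arccos x))
          / sqrt (1 - x\<^sup>2))"
  proof (rule integral_spike[of "{-1,1}"])
    fix x assume "x \<in> {-1..1::real} - {-1, 1}"
    thus "(g x * cos (real s * arccos x) - g x * cos (real (Suc s) * arccos x)) / sqrt (1 - x\<^sup>2)
        = g x * Jac (1/2) s x * (1 - x) powr (1/2) * (1 + x) powr (-1/2)"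
      using jacobi_weight_plus_half[of x s] by (simp add: mult.assoc right_diff_distrib)
  qed simp
  also have "\<dots> = integral {0..pi} (\<lambda>t. g (cos t) * cos (real s * arccos (cos t))
      - g (cos t) * cos (real (Suc s) * arccos (cos t)))"
    by (rule integral_unique, rule has_integral_arccos_substitution)
       (intro continuous_on_diff continuous_on_mult_cos_arccos[OF cg])
  also have "\<dots> = integral {0..pi} (\<lambda>t. g (cos t) * cos (real s * t) - g (cos t) * cos (real (Suc s) * t))"
    by (rule integral_cong) (simp add: arccos_cos)
  also have "\<dots> = integral {0..pi} (\<lambda>t. g (cos t) * cos (real s * t))
      - integral {0..pi} (\<lambda>t. g (cos t) * cos (real (Suc s) * t))"
    by (intro integral_diff integrable_continuous_interval continuous_on_cos_comp_mult_cos[OF cg])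
  finally show ?thesis by (simp add: jacobi_coeff_def cheb_coeff_def Wt_def diff_divide_distrib)
qed

lemma has_integral_cos_mult_0:
  assumes "1 \<le> s"
  shows "((\<lambda>t. cos (real s * t)) has_integral 0) {0..pi}"
proof -
  have "((\<lambda>t. cos (real s * t)) has_integral (sin (real s * pi) / real s - sin (real s * 0) / real s)) {0..pi}"
  proof (rule fundamental_theorem_of_calculus)
    fix t assume "t \<in> {0..pi}"
    have "((\<lambda>t. sin (real s * t) / real s) has_real_derivative (cos (real s * t) * real s / real s))
        (at t within {0..pi})"
      by (auto intro!: derivative_eq_intros)
    thus "((\<lambda>t. sin (real s * t) / real s) has_vector_derivative cos (real s * t)) (at t within {0..pi})"
      using assms by (simp add: has_real_derivative_iff_has_vector_derivative)
  qed simp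
  thus ?thesis by simp
qed

text \<open>Multiplication by \<open>x - 1 = cos t - 1\<close> acts on cosine coefficients as the second difference,
  because \<open>2 cos t cos (s t) = cos ((s - 1) t) + cos ((s + 1) t)\<close>.\<close>
lemma cheb_coeff_mult_x_minus_1:
  assumes ch: "continuous_on {-1..1} h" and geq: "\<And>x. x \<in> {-1..1} \<Longrightarrow> g x = c + (x - 1) * h x"
    and s: "1 \<le> s"
  shows "2 * cheb_coeff g s = cheb_coeff h (s - 1) + cheb_coeff h (Suc s) - 2 * cheb_coeff h s"
proof -
  have ch_int: "((\<lambda>t. h (cos t) * cos (real k * t)) has_integral pi * cheb_coeff h k) {0..pi}" for k
    using integrable_integral[OF integrable_continuous_interval[OF continuous_on_cos_comp_mult_cos[OF ch]]]
    by (simp add: cheb_coeff_def)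
  have e: "2 * (g (cos t) * cos (real s * t)) = c * 2 * cos (real s * t) + (h (cos t) * cos (real (s - 1) * t)
      + h (cos t) * cos (real (Suc s) * t) - 2 * (h (cos t) * cos (real s * t)))" for t
  proof -
    have gc: "g (cos t) = c + (cos t - 1) * h (cos t)" by (rule geq) auto
    have "cos (real (s - 1) * t) = cos (real s * t - t)" "cos (real (Suc s) * t) = cos (real s * t + t)"
      using s by (simp_all add: algebra_simps)
    hence c1: "cos (real (s - 1) * t) = cos (real s * t) * cos t + sin (real s * t) * sin t"
      and c2: "cos (real (Suc s) * t) = cos (real s * t) * cos t - sin (real s * t) * sin t"
      by (simp_all only: cos_diff cos_add)
    show ?thesis unfolding gc c1 c2 by (simp add: algebra_simps)
  qed
  have "((\<lambda>t. c * 2 * cos (real s * t) + (h (cos t) * cos (real (s - 1) * t)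
      + h (cos t) * cos (real (Suc s) * t) - 2 * (h (cos t) * cos (real s * t)))) has_integral
      (c * 2 * 0 + (pi * cheb_coeff h (s - 1) + pi * cheb_coeff h (Suc s) - 2 * (pi * cheb_coeff h s)))) {0..pi}"
    by (intro has_integral_add has_integral_diff has_integral_mult_right has_integral_cos_mult_0 s ch_int)
  hence lhs: "((\<lambda>t. 2 * (g (cos t) * cos (real s * t))) has_integral
      (pi * cheb_coeff h (s - 1) + pi * cheb_coeff h (Suc s) - 2 * (pi * cheb_coeff h s))) {0..pi}"
    unfolding e by simp
  have "(\<lambda>t. g (cos t) * cos (real s * t)) integrable_on {0..pi}"
    using integrable_cmul[OF has_integral_integrable[OF lhs], of "1/2"] by simp
  hence "((\<lambda>t. 2 * (g (cos t) * cos (real s * t))) has_integral 2 * (pi * cheb_coeff g s)) {0..pi}"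
    by (intro has_integral_mult_right) (simp add: cheb_coeff_def integrable_integral)
  from has_integral_unique[OF this lhs]
  have "pi * (2 * cheb_coeff g s) = pi * (cheb_coeff h (s - 1) + cheb_coeff h (Suc s) - 2 * cheb_coeff h s)"
    by (simp add: algebra_simps)
  thus ?thesis by simp
qed

section \<open>Infinite lower triangular matrices\<close>

lemma infsum_eq_suminf_nat:
  fixes f :: "nat \<Rightarrow> 'a::{t2_space, comm_monoid_add}"
  assumes "f summable_on UNIV"
  shows "infsum f UNIV = suminf f"
  using sums_unique[OF has_sum_imp_sums[OF has_sum_infsum[OF assms]]] by simp

lemma suminf_swap_lower_triangular:
  fixes F :: "nat \<Rightarrow> nat \<Rightarrow> real"
  assumes F0: "\<And>z y. z < y \<Longrightarrow> F z y = 0" and sb: "summable (\<lambda>z. \<Sum>y\<le>z. \<bar>F z y\<bar>)"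
  shows "(\<Sum>z. \<Sum>y\<le>z. F z y) = (\<Sum>y. \<Sum>z. F z y)"
proof -
  have row: "infsum (F z) UNIV = (\<Sum>y\<le>z. F z y)" "infsum (\<lambda>y. \<bar>F z y\<bar>) UNIV = (\<Sum>y\<le>z. \<bar>F z y\<bar>)"
    for z
    using infsum_cong_neutral[of "{..z}" UNIV "F z" "F z"]
      infsum_cong_neutral[of "{..z}" UNIV "\<lambda>y. \<bar>F z y\<bar>" "\<lambda>y. \<bar>F z y\<bar>"] F0
    by (auto simp: not_le)
  have row_abs: "(\<lambda>y. norm (F z y)) summable_on UNIV" for z
    by (rule norm_summable_imp_summable_on, rule summable_finite[of "{..z}"]) (use F0 in \<open>auto simp: not_le\<close>)
  have "(\<lambda>z. norm (infsum (\<lambda>y. norm (F z y)) UNIV)) summable_on UNIV"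
    by (rule norm_summable_imp_summable_on) (use sb in \<open>simp add: row sum_nonneg\<close>)
  hence absF: "(\<lambda>p. norm ((\<lambda>(z, y). F z y) p)) summable_on UNIV \<times> UNIV"
    using row_abs by (subst Infinite_Sum.abs_summable_on_Sigma_iff) (simp add: case_prod_unfold)
  hence sumF: "(\<lambda>(z, y). F z y) summable_on UNIV \<times> UNIV"
    by (rule abs_summable_summable)
  have "(\<lambda>p. norm ((\<lambda>(y, z). F z y) p)) summable_on UNIV \<times> UNIV"
    using absF by (subst (asm) summable_on_swap) (simp add: case_prod_unfold)
  hence "(\<lambda>z. norm (F z y)) summable_on UNIV" for y
    by (subst (asm) Infinite_Sum.abs_summable_on_Sigma_iff) simp
  hence col: "(\<lambda>z. F z y) summable_on UNIV" for y
    by (rule abs_summable_summable)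
  have "(\<lambda>(y, z). F z y) summable_on UNIV \<times> UNIV"
    using sumF by (subst (asm) summable_on_swap) (simp add: case_prod_unfold)
  from summable_on_Sigma_banach[OF this[unfolded UNIV_Times_UNIV[symmetric]]]
  have col_sum: "(\<lambda>y. infsum (\<lambda>z. F z y) UNIV) summable_on UNIV"
    by simp
  have "summable (\<lambda>z. norm (\<Sum>y\<le>z. F z y))"
    by (rule summable_comparison_test'[OF sb]) simp
  hence "(\<Sum>z. \<Sum>y\<le>z. F z y) = infsum (\<lambda>z. infsum (F z) UNIV) UNIV"
    by (simp add: row infsum_eq_suminf_nat norm_summable_imp_summable_on)
  also have "\<dots> = infsum (\<lambda>y. infsum (\<lambda>z. F z y) UNIV) UNIV"
    by (rule infsum_swap_banach[OF sumF])
  also have "\<dots> = (\<Sum>y. \<Sum>z. F z y)"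
    using col_sum by (simp add: col infsum_eq_suminf_nat)
  finally show ?thesis .
qed

definition lower_triangular :: "(nat \<Rightarrow> nat \<Rightarrow> real) \<Rightarrow> bool" where
  "lower_triangular M \<longleftrightarrow> (\<forall>z y. z < y \<longrightarrow> M z y = 0)"

definition poly_bounded :: "(nat \<Rightarrow> nat \<Rightarrow> real) \<Rightarrow> bool" where
  "poly_bounded M \<longleftrightarrow> (\<exists>K p. \<forall>z y. \<bar>M z y\<bar> \<le> K * real (Suc z) ^ p)"

definition rapid_decay :: "(nat \<Rightarrow> real) \<Rightarrow> bool" where
  "rapid_decay c \<longleftrightarrow> (\<forall>k. summable (\<lambda>z. real (Suc z) ^ k * \<bar>c z\<bar>))"

definition vec_mmul :: "(nat \<Rightarrow> real) \<Rightarrow> (nat \<Rightarrow> nat \<Rightarrow> real) \<Rightarrow> nat \<Rightarrow> real" where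
  "vec_mmul c M y = (\<Sum>z. c z * M z y)"

lemma mmul_lower_triangular: "lower_triangular M \<Longrightarrow> mmul M B x y = (\<Sum>z\<le>x. M x z * B z y)"
  unfolding mmul_def by (rule suminf_finite) (auto simp: lower_triangular_def)

lemma lower_triangular_mmul: "lower_triangular M \<Longrightarrow> lower_triangular B \<Longrightarrow> lower_triangular (mmul M B)"
  by (auto simp: lower_triangular_def mmul_lower_triangular intro!: sum.neutral)

lemma lower_triangular_mid: "lower_triangular mid"
  by (simp add: lower_triangular_def mid_def)

lemma lower_triangular_mpow: "lower_triangular M \<Longrightarrow> lower_triangular (mpow M k)"
  by (induction k) (simp_all add: lower_triangular_mid lower_triangular_mmul)

lemma poly_bounded_nonneg:
  assumes "poly_bounded M"
  obtains K p where "K \<ge> 0" "\<And>z y. \<bar>M z y\<bar> \<le> K * real (Suc z) ^ p"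
proof -
  obtain K p where K: "\<And>z y. \<bar>M z y\<bar> \<le> K * real (Suc z) ^ p"
    using assms by (auto simp: poly_bounded_def)
  have "\<bar>M 0 0\<bar> \<le> K" using K[of 0 0] by simp
  hence "K \<ge> 0" using abs_ge_zero[of "M 0 0"] by linarith
  with K that show ?thesis by blast
qed

lemma lower_triangular_row_bound:
  assumes M: "lower_triangular M" "poly_bounded M" and B: "poly_bounded B"
  obtains K p where "\<And>z s. (\<Sum>y\<le>z. \<bar>M z y * B y s\<bar>) \<le> K * real (Suc z) ^ p"
proof -
  obtain K1 p where K1: "K1 \<ge> 0" "\<And>z y. \<bar>M z y\<bar> \<le> K1 * real (Suc z) ^ p"
    using poly_bounded_nonneg[OF M(2)] by blast
  obtain K2 q where K2: "K2 \<ge> 0" "\<And>z y. \<bar>B z y\<bar> \<le> K2 * real (Suc z) ^ q"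
    using poly_bounded_nonneg[OF B] by blast
  have "(\<Sum>y\<le>z. \<bar>M z y * B y s\<bar>) \<le> (K1 * K2) * real (Suc z) ^ Suc (p + q)" for z s
  proof -
    have "(\<Sum>y\<le>z. \<bar>M z y * B y s\<bar>) \<le> (\<Sum>y\<le>z. K1 * real (Suc z) ^ p * (K2 * real (Suc z) ^ q))"
    proof (rule sum_mono)
      fix y assume "y \<in> {..z}"
      hence "K2 * real (Suc y) ^ q \<le> K2 * real (Suc z) ^ q"
        using K2(1) by (intro mult_left_mono power_mono) auto
      thus "\<bar>M z y * B y s\<bar> \<le> K1 * real (Suc z) ^ p * (K2 * real (Suc z) ^ q)"
        unfolding abs_mult using K1(2)[of z y] K2(2)[of y s] by (intro mult_mono) auto
    qed
    also have "\<dots> = (K1 * K2) * real (Suc z) ^ Suc (p + q)"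
      by (simp add: power_add algebra_simps)
    finally show ?thesis .
  qed
  thus ?thesis using that by blast
qed

lemma poly_bounded_mmul:
  assumes "lower_triangular M" "poly_bounded M" "poly_bounded B"
  shows "poly_bounded (mmul M B)"
proof -
  obtain K p where K: "\<And>z s. (\<Sum>y\<le>z. \<bar>M z y * B y s\<bar>) \<le> K * real (Suc z) ^ p"
    using lower_triangular_row_bound[OF assms] by blast
  have "\<bar>mmul M B z s\<bar> \<le> K * real (Suc z) ^ p" for z s
    unfolding mmul_lower_triangular[OF assms(1)] by (rule order_trans[OF sum_abs K])
  thus ?thesis unfolding poly_bounded_def by blast
qed

lemma poly_bounded_mid: "poly_bounded mid"
  unfolding poly_bounded_def by (rule exI[of _ 1], rule exI[of _ 0]) (simp add: mid_def)

lemma poly_bounded_mpow: "lower_triangular M \<Longrightarrow> poly_bounded M \<Longrightarrow> poly_bounded (mpow M k)"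
  by (induction k) (simp_all add: poly_bounded_mid poly_bounded_mmul lower_triangular_mpow)

lemma lower_triangular_Tm: "lower_triangular Tm"
  by (auto simp: lower_triangular_def Tm_def)

lemma lower_triangular_phim: "lower_triangular phim"
  by (auto simp: lower_triangular_def phim_def)

lemma poly_bounded_Tm: "poly_bounded Tm"
  unfolding poly_bounded_def by (rule exI[of _ 2], rule exI[of _ 0]) (auto simp: Tm_def)

lemma poly_bounded_phim: "poly_bounded phim"
  unfolding poly_bounded_def by (rule exI[of _ 1], rule exI[of _ 0]) (auto simp: phim_def)

lemma vec_mmul_mid: "vec_mmul c mid = c"
proof
  fix y
  have "(\<Sum>z. c z * mid z y) = (\<Sum>z\<in>{y}. c z * mid z y)"
    by (rule suminf_finite) (auto simp: mid_def)
  thus "vec_mmul c mid y = c y" by (simp add: vec_mmul_def mid_def)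
qed
lemma summable_mult_poly_bounded:
  assumes c: "rapid_decay c" and M: "poly_bounded M"
  shows "summable (\<lambda>z. c z * M z y)"
proof -
  obtain K p where K: "K \<ge> 0" "\<And>z y. \<bar>M z y\<bar> \<le> K * real (Suc z) ^ p"
    using poly_bounded_nonneg[OF M] by blast
  have "summable (\<lambda>z. K * (real (Suc z) ^ p * \<bar>c z\<bar>))"
    using c by (intro summable_mult) (auto simp: rapid_decay_def)
  moreover have "norm (c z * M z y) \<le> K * (real (Suc z) ^ p * \<bar>c z\<bar>)" for z
    using mult_left_mono[OF K(2)[of z y] abs_ge_zero[of "c z"]] by (simp add: abs_mult mult_ac)
  ultimately show ?thesis by (rule summable_comparison_test'[where N = 0])
qed

lemma vec_mmul_mmul:
  assumes c: "rapid_decay c" and M: "lower_triangular M" "poly_bounded M" and B: "poly_bounded B"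
  shows "vec_mmul c (mmul M B) = vec_mmul (vec_mmul c M) B"
proof
  fix s
  obtain K p where K: "\<And>z s. (\<Sum>y\<le>z. \<bar>M z y * B y s\<bar>) \<le> K * real (Suc z) ^ p"
    using lower_triangular_row_bound[OF M B] by blast
  have sb: "summable (\<lambda>z. \<Sum>y\<le>z. \<bar>c z * M z y * B y s\<bar>)"
  proof (rule summable_comparison_test'[where N = 0])
    show "summable (\<lambda>z. K * (real (Suc z) ^ p * \<bar>c z\<bar>))"
      using c by (intro summable_mult) (auto simp: rapid_decay_def)
    fix z
    have "(\<Sum>y\<le>z. \<bar>c z * M z y * B y s\<bar>) = \<bar>c z\<bar> * (\<Sum>y\<le>z. \<bar>M z y * B y s\<bar>)"
      by (simp add: sum_distrib_left abs_mult mult.assoc)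
    also have "\<dots> \<le> K * (real (Suc z) ^ p * \<bar>c z\<bar>)"
      using mult_left_mono[OF K[of z s] abs_ge_zero[of "c z"]] by (simp add: mult_ac)
    finally show "norm (\<Sum>y\<le>z. \<bar>c z * M z y * B y s\<bar>) \<le> K * (real (Suc z) ^ p * \<bar>c z\<bar>)"
      by (simp add: sum_nonneg)
  qed
  have swap: "(\<Sum>z. \<Sum>y\<le>z. c z * M z y * B y s) = (\<Sum>y. \<Sum>z. c z * M z y * B y s)"
    by (rule suminf_swap_lower_triangular[OF _ sb]) (use M(1) in \<open>simp add: lower_triangular_def\<close>)
  have "vec_mmul c (mmul M B) s = (\<Sum>z. \<Sum>y\<le>z. c z * M z y * B y s)"
    by (simp add: vec_mmul_def mmul_lower_triangular[OF M(1)] sum_distrib_left mult.assoc)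
  also have "\<dots> = (\<Sum>y. (\<Sum>z. c z * M z y) * B y s)"
    unfolding swap by (simp add: suminf_mult2 summable_mult_poly_bounded[OF c M(2)])
  also have "\<dots> = vec_mmul (vec_mmul c M) B s"
    by (simp add: vec_mmul_def)
  finally show "vec_mmul c (mmul M B) s = vec_mmul (vec_mmul c M) B s" .
qed

section \<open>Difference quotients\<close>

definition dquot :: "complex \<Rightarrow> (complex \<Rightarrow> complex) \<Rightarrow> complex \<Rightarrow> complex" where
  "dquot c G z = (if z = c then deriv G c else (G z - G c) / (z - c))"

lemma holomorphic_on_dquot:
  assumes "G holomorphic_on U" "open U" "c \<in> U"
  shows "dquot c G holomorphic_on U"
  unfolding dquot_def[abs_def] by (rule pole_lemma[OF assms(1)]) (simp add: interior_open assms)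

lemma holomorphic_on_dquot_iterate:
  assumes "G holomorphic_on U" "open U" "c \<in> U"
  shows "(dquot c ^^ j) G holomorphic_on U"
  by (induction j) (auto intro: holomorphic_on_dquot assms)

lemma dquot_decomp: "F z = F c + (z - c) * dquot c F z"
  by (cases "z = c") (simp_all add: dquot_def)

lemma dquot_iterate_eq:
  assumes "z \<noteq> c"
  shows "(dquot c ^^ m) F z = (F z - (\<Sum>j<m. (dquot c ^^ j) F c * (z - c) ^ j)) / (z - c) ^ m"
proof (induction m)
  case (Suc m)
  have "(dquot c ^^ Suc m) F z = ((dquot c ^^ m) F z - (dquot c ^^ m) F c) / (z - c)"
    using assms by (simp add: dquot_def)
  thus ?case unfolding Suc.IH using assms by (simp add: field_simps)
qed simp

lemma higher_deriv_diff_ident: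
  fixes c :: complex
  shows "(deriv ^^ i) (\<lambda>w. w - c) z = (if i = 0 then z - c else if i = 1 then 1 else 0)"
  using higher_deriv_diff[of "\<lambda>w. w" UNIV "\<lambda>w. c" z i] by simp

lemma higher_deriv_mult_diff_ident:
  assumes "H holomorphic_on U" "open U" "c \<in> U"
  shows "(deriv ^^ Suc m) (\<lambda>w. (w - c) * H w) c = of_nat (Suc m) * (deriv ^^ m) H c"
proof -
  have "(deriv ^^ Suc m) (\<lambda>w. (w - c) * H w) c
      = (\<Sum>i = 0..Suc m. of_nat (Suc m choose i) * (deriv ^^ i) (\<lambda>w. w - c) c * (deriv ^^ (Suc m - i)) H c)"
    by (rule higher_deriv_mult[OF _ assms]) (intro holomorphic_intros)
  also have "\<dots> = (\<Sum>i = 0..Suc m. if i = 1 then of_nat (Suc m) * (deriv ^^ m) H c else 0)"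
    by (rule sum.cong) (auto simp: higher_deriv_diff_ident)
  finally show ?thesis by simp
qed

lemma dquot_iterate_at:
  assumes "F holomorphic_on U" "open U" "c \<in> U"
  shows "(dquot c ^^ m) F c = (deriv ^^ m) F c / fact m"
  using assms(1)
proof (induction m arbitrary: F)
  case (Suc m F)
  have hQ: "dquot c F holomorphic_on U" by (rule holomorphic_on_dquot[OF Suc.prems assms(2,3)])
  have "(deriv ^^ Suc m) F c = of_nat (Suc m) * (deriv ^^ m) (dquot c F) c"
  proof -
    have "(deriv ^^ Suc m) F c = (deriv ^^ Suc m) (\<lambda>w. F c + (w - c) * dquot c F w) c"
      by (subst dquot_decomp[of F _ c, abs_def]) simp
    also have "\<dots> = (deriv ^^ Suc m) (\<lambda>w. (w - c) * dquot c F w) c"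
      by (subst higher_deriv_add[OF _ _ assms(2,3)]) (auto intro!: holomorphic_intros hQ)
    also have "\<dots> = of_nat (Suc m) * (deriv ^^ m) (dquot c F) c"
      by (rule higher_deriv_mult_diff_ident[OF hQ assms(2,3)])
    finally show ?thesis .
  qed
  hence "(deriv ^^ Suc m) F c / fact (Suc m) = (deriv ^^ m) (dquot c F) c / fact m"
    by (simp only: fact_Suc of_nat_mult mult_divide_mult_cancel_left of_nat_eq_0_iff
        nat.distinct(2) not_False_eq_True)
  also have "\<dots> = (dquot c ^^ Suc m) F c"
    using Suc.IH[OF hQ] by (simp only: funpow_Suc_right comp_def)
  finally show ?case ..
qed simp

lemma dquot_mult_power:
  assumes H: "H field_differentiable (at c)"
  shows "dquot c (\<lambda>z. H z * (z - c) ^ Suc m) = (\<lambda>z. H z * (z - c) ^ m)"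
proof
  fix z
  show "dquot c (\<lambda>z. H z * (z - c) ^ Suc m) z = H z * (z - c) ^ m"
  proof (cases "z = c")
    case True
    have "((\<lambda>z. H z * (z - c) ^ Suc m) has_field_derivative
           (deriv H c * (c - c) ^ Suc m + H c * (of_nat (Suc m) * (c - c) ^ m * 1))) (at c)"
      by (rule derivative_eq_intros field_differentiable_derivI[OF H] refl)+ simp
    hence "deriv (\<lambda>z. H z * (z - c) ^ Suc m) c = H c * (c - c) ^ m"
      by (cases m) (simp_all add: DERIV_imp_deriv)
    thus ?thesis using True by (simp add: dquot_def)
  qed (simp add: dquot_def field_simps)
qed

lemma dquot_iterate_mult_power:
  assumes "H field_differentiable (at c)"
  shows "(dquot c ^^ j) (\<lambda>z. H z * (z - c) ^ (m + j)) = (\<lambda>z. H z * (z - c) ^ m)"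
proof (induction j)
  case (Suc j)
  thus ?case
    by (simp only: funpow_Suc_right comp_def add_Suc_right dquot_mult_power[OF assms])
qed simp

section \<open>The actions of \<open>T\<close> and \<open>\<phi>\<close> on Jacobi coefficients\<close>

lemma summable_pow_mult_geometric:
  fixes \<rho> :: real
  assumes "0 \<le> \<rho>" "\<rho> < 1"
  shows "summable (\<lambda>n. real (Suc n) ^ k * \<rho> ^ n)"
proof -
  define c where "c = (\<lambda>k. (diffs ^^ k) (\<lambda>_. 1::real))"
  have sm: "summable (\<lambda>n. c k n * x ^ n)" if "norm x < 1" for x :: real and k
    using that
  proof (induction k arbitrary: x)
    case (Suc k x)
    from termdiff_converges[OF Suc.prems Suc.IH] show ?case by (simp add: c_def)
  qed (simp add: c_def summable_geometric)
  have ge: "c k n \<ge> real (Suc n) ^ k" for n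
  proof (induction k arbitrary: n)
    case (Suc k n)
    have "real (Suc n) ^ Suc k \<le> real (Suc n) * real (Suc (Suc n)) ^ k"
      by (simp add: mult_left_mono power_mono)
    also have "\<dots> \<le> real (Suc n) * c k (Suc n)"
      using Suc.IH[of "Suc n"] by (intro mult_left_mono) auto
    also have "\<dots> = c (Suc k) n" by (simp add: c_def diffs_def)
    finally show ?case .
  qed (simp add: c_def)
  show ?thesis
    by (rule summable_comparison_test'[OF sm[of \<rho> k]])
       (use ge assms in \<open>auto simp: abs_mult mult_right_mono\<close>)
qed

lemma rapid_decay_jacobi_coeff:
  assumes hol: "G holomorphic_on U" "nbhd_interval U" and b: "b = 1/2 \<or> b = -1/2"
  shows "rapid_decay (jacobi_coeff (re_trace G) b)"
proof -
  obtain C \<rho> where r: "0 < \<rho>" "\<rho> < 1" "\<And>s. \<bar>cheb_coeff (re_trace G) s\<bar> \<le> C * \<rho> ^ s"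
    using cheb_coeff_decay[OF hol] by blast
  have cg: "continuous_on {-1..1} (re_trace G)" by (rule continuous_on_re_trace[OF hol])
  have "\<bar>cheb_coeff (re_trace G) 0\<bar> \<le> C" using r(3)[of 0] by simp
  hence "C \<ge> 0" using abs_ge_zero[of "cheb_coeff (re_trace G) 0"] by linarith
  hence "C * \<rho> ^ Suc z \<le> C * \<rho> ^ z" for z
    using r by (intro mult_left_mono power_decreasing) auto
  hence bd: "\<bar>jacobi_coeff (re_trace G) b z\<bar> \<le> 2 * C * \<rho> ^ z" for z
  proof (cases "b = 1/2")
    case True
    thus ?thesis using r(3)[of z] r(3)[of "Suc z"] \<open>C * \<rho> ^ Suc z \<le> C * \<rho> ^ z\<close>
      unfolding True jacobi_coeff_plus_half[OF cg] by linarith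
  next
    case False
    hence "b = -1/2" using b by simp
    hence "jacobi_coeff (re_trace G) b z = Wt (-1/2) z * cheb_coeff (re_trace G) z"
      by (simp only: jacobi_coeff_minus_half[OF cg])
    thus ?thesis using r(3)[of z] \<open>C \<ge> 0\<close>
      by (cases "z = 0") (simp_all add: Wt_def abs_mult)
  qed
  show ?thesis unfolding rapid_decay_def
  proof
    fix k
    show "summable (\<lambda>z. real (Suc z) ^ k * \<bar>jacobi_coeff (re_trace G) b z\<bar>)"
    proof (rule summable_comparison_test'[where N = 0])
      show "summable (\<lambda>z. 2 * C * (real (Suc z) ^ k * \<rho> ^ z))"
        using r by (intro summable_mult summable_pow_mult_geometric) auto
      fix z
      show "norm (real (Suc z) ^ k * \<bar>jacobi_coeff (re_trace G) b z\<bar>) \<le> 2 * C * (real (Suc z) ^ k * \<rho> ^ z)"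
        using mult_left_mono[OF bd[of z], of "real (Suc z) ^ k"] by (simp add: mult_ac)
    qed
  qed
qed

lemma sums_Tm_telescope:
  fixes e :: "nat \<Rightarrow> real"
  assumes "e \<longlonglongrightarrow> 0"
  shows "(\<lambda>z. (e z - e (Suc z)) * Tm z s) sums (Wt (-1/2) s * e s)"
proof -
  define u where "u = (\<lambda>z. if z \<le> s then e s else e z)"
  have "eventually (\<lambda>z. e z = u z) sequentially"
    using eventually_gt_at_top[of s] by eventually_elim (simp add: u_def)
  hence "u \<longlonglongrightarrow> 0" using assms tendsto_cong by fastforce
  from sums_mult2[OF telescope_sums'[OF this], of "Wt (-1/2) s"]
  have "(\<lambda>z. (u z - u (Suc z)) * Wt (-1/2) s) sums (e s * Wt (-1/2) s)" by (simp add: u_def)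
  moreover have "(u z - u (Suc z)) * Wt (-1/2) s = (e z - e (Suc z)) * Tm z s" for z
    by (auto simp: u_def Tm_def Wt_def)
  ultimately show ?thesis by (simp add: mult.commute)
qed

lemma sums_phim_telescope:
  fixes g h :: "nat \<Rightarrow> real"
  assumes h0: "h \<longlonglongrightarrow> 0" and rel: "\<And>z. 1 \<le> z \<Longrightarrow> 2 * g z = h (z - 1) + h (Suc z) - 2 * h z"
  shows "(\<lambda>z. (Wt (-1/2) z * g z) * phim z s) sums (h s - h (Suc s))"
proof -
  define D where "D = (\<lambda>z. h (Suc z) - h z)"
  have "D \<longlonglongrightarrow> 0" unfolding D_def
    using tendsto_diff[OF LIMSEQ_Suc[OF h0] h0] by simp
  moreover define u where "u = (\<lambda>z. if z \<le> s then D s else D z)"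
  moreover have "eventually (\<lambda>z. D z = u z) sequentially"
    using eventually_gt_at_top[of s] by eventually_elim (simp add: u_def)
  ultimately have "u \<longlonglongrightarrow> 0" using tendsto_cong by fastforce
  from telescope_sums[OF this] have T: "(\<lambda>z. u (Suc z) - u z) sums (h s - h (Suc s))"
    by (simp add: u_def D_def)
  have "(Wt (-1/2) (Suc z) * g (Suc z)) * phim (Suc z) s = u (Suc z) - u z" for z
  proof (cases "s < Suc z")
    case True
    thus ?thesis using rel[of "Suc z"] by (cases "z = s") (auto simp: Wt_def phim_def u_def D_def)
  qed (simp add: phim_def u_def)
  with T have "(\<lambda>z. (Wt (-1/2) (Suc z) * g (Suc z)) * phim (Suc z) s) sums (h s - h (Suc s))"
    by simp
  thus ?thesis by (subst (asm) sums_Suc_iff) (simp add: phim_def)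
qed

lemma vec_mmul_Tm_jacobi_coeff:
  assumes "G holomorphic_on U" "nbhd_interval U"
  shows "vec_mmul (jacobi_coeff (re_trace G) (1/2)) Tm = jacobi_coeff (re_trace G) (-1/2)"
proof
  fix s
  have cg: "continuous_on {-1..1} (re_trace G)" by (rule continuous_on_re_trace[OF assms])
  from sums_Tm_telescope[OF cheb_coeff_tendsto_zero[OF assms], of s]
  show "vec_mmul (jacobi_coeff (re_trace G) (1/2)) Tm s = jacobi_coeff (re_trace G) (-1/2) s"
    unfolding jacobi_coeff_plus_half[OF cg] jacobi_coeff_minus_half[OF cg] by (simp add: vec_mmul_def sums_iff)
qed

lemma re_trace_dquot:
  "re_trace G x = re_trace G 1 + (x - 1) * re_trace (dquot 1 G) x"
  using arg_cong[OF dquot_decomp[of G "of_real x" 1], of Re] by (simp add: re_trace_def)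

lemma vec_mmul_phim_jacobi_coeff:
  assumes hol: "G holomorphic_on U" and U: "nbhd_interval U"
  shows "vec_mmul (jacobi_coeff (re_trace G) (-1/2)) phim = jacobi_coeff (re_trace (dquot 1 G)) (1/2)"
proof
  fix s
  have holQ: "dquot 1 G holomorphic_on U"
    using holomorphic_on_dquot[OF hol] nbhd_interval_one[OF U] U by (simp add: nbhd_interval_def)
  have cg: "continuous_on {-1..1} (re_trace G)" by (rule continuous_on_re_trace[OF hol U])
  have cq: "continuous_on {-1..1} (re_trace (dquot 1 G))" by (rule continuous_on_re_trace[OF holQ U])
  have "2 * cheb_coeff (re_trace G) z = cheb_coeff (re_trace (dquot 1 G)) (z - 1)
      + cheb_coeff (re_trace (dquot 1 G)) (Suc z) - 2 * cheb_coeff (re_trace (dquot 1 G)) z"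
    if "1 \<le> z" for z
    by (rule cheb_coeff_mult_x_minus_1[OF cq re_trace_dquot that])
  from sums_phim_telescope[OF cheb_coeff_tendsto_zero[OF holQ U] this, of s]
  show "vec_mmul (jacobi_coeff (re_trace G) (-1/2)) phim s = jacobi_coeff (re_trace (dquot 1 G)) (1/2) s"
    unfolding jacobi_coeff_plus_half[OF cq] jacobi_coeff_minus_half[OF cg] by (simp add: vec_mmul_def sums_iff)
qed

lemma vec_mmul_mpow_orbit:
  assumes A: "lower_triangular A" "poly_bounded A"
    and f0: "rapid_decay (f 0)" and step: "\<And>j. vec_mmul (f j) A = f (Suc j)"
  shows "vec_mmul (f 0) (mpow A k) = f k"
proof (induction k)
  case (Suc k)
  have "vec_mmul (f 0) (mpow A (Suc k)) = vec_mmul (vec_mmul (f 0) (mpow A k)) A"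
    unfolding mpow.simps
    by (rule vec_mmul_mmul[OF f0 lower_triangular_mpow[OF A(1)] poly_bounded_mpow[OF A] A(2)])
  thus ?case by (simp add: Suc.IH step)
qed (simp add: vec_mmul_mid)

lemma holomorphic_on_dquot_1_iterate:
  assumes "G holomorphic_on U" "nbhd_interval U"
  shows "(dquot 1 ^^ j) G holomorphic_on U"
  using holomorphic_on_dquot_iterate[OF assms(1)] nbhd_interval_one[OF assms(2)] assms(2)
  by (simp add: nbhd_interval_def)

lemma vec_mmul_Tm_phim_jacobi_coeff:
  assumes "G holomorphic_on U" "nbhd_interval U"
  shows "vec_mmul (jacobi_coeff (re_trace G) (1/2)) (mmul Tm phim)
       = jacobi_coeff (re_trace (dquot 1 G)) (1/2)"
proof -
  have "vec_mmul (jacobi_coeff (re_trace G) (1/2)) (mmul Tm phim)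
      = vec_mmul (vec_mmul (jacobi_coeff (re_trace G) (1/2)) Tm) phim"
    by (rule vec_mmul_mmul[OF rapid_decay_jacobi_coeff[OF assms] lower_triangular_Tm poly_bounded_Tm
          poly_bounded_phim]) simp
  also have "\<dots> = jacobi_coeff (re_trace (dquot 1 G)) (1/2)"
    unfolding vec_mmul_Tm_jacobi_coeff[OF assms] by (rule vec_mmul_phim_jacobi_coeff[OF assms])
  finally show ?thesis .
qed

lemma vec_mmul_phim_Tm_jacobi_coeff:
  assumes "G holomorphic_on U" "nbhd_interval U"
  shows "vec_mmul (jacobi_coeff (re_trace G) (-1/2)) (mmul phim Tm)
       = jacobi_coeff (re_trace (dquot 1 G)) (-1/2)"
proof -
  have "vec_mmul (jacobi_coeff (re_trace G) (-1/2)) (mmul phim Tm)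
      = vec_mmul (vec_mmul (jacobi_coeff (re_trace G) (-1/2)) phim) Tm"
    by (rule vec_mmul_mmul[OF rapid_decay_jacobi_coeff[OF assms] lower_triangular_phim poly_bounded_phim
          poly_bounded_Tm]) simp
  also have "\<dots> = jacobi_coeff (re_trace (dquot 1 G)) (-1/2)"
    unfolding vec_mmul_phim_jacobi_coeff[OF assms]
    by (rule vec_mmul_Tm_jacobi_coeff[OF holomorphic_on_dquot_1_iterate[OF assms, of 1, simplified] assms(2)])
  finally show ?thesis .
qed

lemma vec_mmul_mpow_Tm_phim_jacobi_coeff:
  assumes hol: "G holomorphic_on U" and U: "nbhd_interval U"
  shows "vec_mmul (jacobi_coeff (re_trace G) (1/2)) (mpow (mmul Tm phim) k)
       = jacobi_coeff (re_trace ((dquot 1 ^^ k) G)) (1/2)"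
  using vec_mmul_mpow_orbit[of "mmul Tm phim" "\<lambda>j. jacobi_coeff (re_trace ((dquot 1 ^^ j) G)) (1/2)" k]
    lower_triangular_mmul[OF lower_triangular_Tm lower_triangular_phim]
    poly_bounded_mmul[OF lower_triangular_Tm poly_bounded_Tm poly_bounded_phim]
    rapid_decay_jacobi_coeff[OF hol U] vec_mmul_Tm_phim_jacobi_coeff[OF holomorphic_on_dquot_1_iterate[OF hol U] U]
  by simp

lemma vec_mmul_mpow_phim_Tm_jacobi_coeff:
  assumes hol: "G holomorphic_on U" and U: "nbhd_interval U"
  shows "vec_mmul (jacobi_coeff (re_trace G) (-1/2)) (mpow (mmul phim Tm) k)
       = jacobi_coeff (re_trace ((dquot 1 ^^ k) G)) (-1/2)"
  using vec_mmul_mpow_orbit[of "mmul phim Tm" "\<lambda>j. jacobi_coeff (re_trace ((dquot 1 ^^ j) G)) (-1/2)" k]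
    lower_triangular_mmul[OF lower_triangular_phim lower_triangular_Tm]
    poly_bounded_mmul[OF lower_triangular_phim poly_bounded_phim poly_bounded_Tm]
    rapid_decay_jacobi_coeff[OF hol U] vec_mmul_phim_Tm_jacobi_coeff[OF holomorphic_on_dquot_1_iterate[OF hol U] U]
  by simp

lemma vec_mmul_mpow_Tm_phim_Tm_jacobi_coeff:
  assumes hol: "G holomorphic_on U" and U: "nbhd_interval U"
  shows "vec_mmul (jacobi_coeff (re_trace G) (1/2)) (mmul (mpow (mmul Tm phim) k) Tm)
       = jacobi_coeff (re_trace ((dquot 1 ^^ k) G)) (-1/2)"
proof -
  have "vec_mmul (jacobi_coeff (re_trace G) (1/2)) (mmul (mpow (mmul Tm phim) k) Tm)
      = vec_mmul (vec_mmul (jacobi_coeff (re_trace G) (1/2)) (mpow (mmul Tm phim) k)) Tm"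
    by (rule vec_mmul_mmul[OF rapid_decay_jacobi_coeff[OF hol U]])
       (simp_all add: lower_triangular_mpow poly_bounded_mpow lower_triangular_mmul poly_bounded_mmul
         lower_triangular_Tm lower_triangular_phim poly_bounded_Tm poly_bounded_phim)
  also have "\<dots> = jacobi_coeff (re_trace ((dquot 1 ^^ k) G)) (-1/2)"
    by (simp only: vec_mmul_mpow_Tm_phim_jacobi_coeff[OF hol U]
        vec_mmul_Tm_jacobi_coeff[OF holomorphic_on_dquot_1_iterate[OF hol U] U])
  finally show ?thesis .
qed

lemma vec_mmul_mpow_phim_Tm_phim_jacobi_coeff:
  assumes hol: "G holomorphic_on U" and U: "nbhd_interval U"
  shows "vec_mmul (jacobi_coeff (re_trace G) (-1/2)) (mmul (mpow (mmul phim Tm) k) phim)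
       = jacobi_coeff (re_trace ((dquot 1 ^^ Suc k) G)) (1/2)"
proof -
  have "vec_mmul (jacobi_coeff (re_trace G) (-1/2)) (mmul (mpow (mmul phim Tm) k) phim)
      = vec_mmul (vec_mmul (jacobi_coeff (re_trace G) (-1/2)) (mpow (mmul phim Tm) k)) phim"
    by (rule vec_mmul_mmul[OF rapid_decay_jacobi_coeff[OF hol U]])
       (simp_all add: lower_triangular_mpow poly_bounded_mpow lower_triangular_mmul poly_bounded_mmul
         lower_triangular_Tm lower_triangular_phim poly_bounded_Tm poly_bounded_phim)
  also have "\<dots> = jacobi_coeff (re_trace ((dquot 1 ^^ Suc k) G)) (1/2)"
    by (simp only: vec_mmul_mpow_phim_Tm_jacobi_coeff[OF hol U] funpow.simps o_apply
        vec_mmul_phim_jacobi_coeff[OF holomorphic_on_dquot_1_iterate[OF hol U] U])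
  finally show ?thesis .
qed

lemma Psi_eq_jacobi_coeff_dquot:
  assumes hol: "G holomorphic_on U" and U: "nbhd_interval U"
    and top: "\<And>z. PsiTop E N a l z = jacobi_coeff (re_trace G) a z"
    and a: "a = 1/2 \<or> a = -1/2" and lev: "is_level n1 a1"
    and ord: "2 * real n1 + a1 \<le> 2 * real N + a"
  shows "Psi E N a n1 a1 l s = jacobi_coeff (re_trace ((dquot 1 ^^ (N - n1)) G)) a1 s"
proof (cases "n1 = N \<and> a1 = a")
  case False
  have Psi: "Psi E N a n1 a1 l s = vec_mmul (jacobi_coeff (re_trace G) a) (phiLev n1 a1 N a) s"
    by (simp only: Psi_def if_not_P[OF False] vec_mmul_def top)
  consider "a1 = -1/2" "a = 1/2" | "a1 = 1/2" "a = 1/2" | "a1 = 1/2" "a = -1/2" | "a1 = -1/2" "a = -1/2"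
    using a lev by (auto simp: is_level_def)
  thus ?thesis
  proof cases
    case 1
    hence pl: "phiLev n1 a1 N a = mmul (mpow (mmul Tm phim) (N - n1)) Tm" by (simp add: phiLev_def)
    show ?thesis unfolding Psi pl unfolding 1
      by (rule fun_cong[OF vec_mmul_mpow_Tm_phim_Tm_jacobi_coeff[OF hol U]])
  next
    case 2
    hence pl: "phiLev n1 a1 N a = mpow (mmul Tm phim) (N - n1)" by (simp add: phiLev_def)
    show ?thesis unfolding Psi pl unfolding 2
      by (rule fun_cong[OF vec_mmul_mpow_Tm_phim_jacobi_coeff[OF hol U]])
  next
    case 3
    hence pl: "phiLev n1 a1 N a = mmul (mpow (mmul phim Tm) (N - n1 - 1)) phim"
      and k: "Suc (N - n1 - 1) = N - n1" using ord by (simp_all add: phiLev_def)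
    show ?thesis unfolding Psi pl unfolding 3
      by (rule fun_cong[OF vec_mmul_mpow_phim_Tm_phim_jacobi_coeff[OF hol U, of "N - n1 - 1", unfolded k]])
  next
    case 4
    hence pl: "phiLev n1 a1 N a = mpow (mmul phim Tm) (N - n1)" by (simp add: phiLev_def)
    show ?thesis unfolding Psi pl unfolding 4
      by (rule fun_cong[OF vec_mmul_mpow_phim_Tm_jacobi_coeff[OF hol U]])
  qed
qed (simp add: Psi_def top)

section \<open>Holomorphic extension of \<open>E\<^sup>\<omega>\<close>\<close>

lemma holomorphic_on_lim_prod:
  fixes f :: "nat \<Rightarrow> complex \<Rightarrow> complex"
  assumes U: "open U" and hol: "\<And>i. f i holomorphic_on U" and M: "summable M"
    and bound: "\<And>i z. z \<in> U \<Longrightarrow> norm (f i z - 1) \<le> M i"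
  shows "(\<lambda>z. lim (\<lambda>n. \<Prod>i<n. f i z)) holomorphic_on U"
proof (rule holomorphic_uniform_sequence[OF U])
  show "(\<lambda>z. \<Prod>i<n. f i z) holomorphic_on U" for n by (intro holomorphic_on_prod hol)
  fix z0 assume "z0 \<in> U"
  then obtain d where d: "d > 0" "cball z0 d \<subseteq> U" using open_contains_cball U by blast
  have "uniformly_convergent_on (cball z0 d) (\<lambda>n z. \<Prod>i<n. f i z)"
  proof (rule uniformly_convergent_on_prod')
    show "continuous_on (cball z0 d) (f i)" for i
      using holomorphic_on_imp_continuous_on[OF hol] continuous_on_subset d(2) by blast
    show "uniformly_convergent_on (cball z0 d) (\<lambda>N z. \<Sum>n<N. norm (f n z - 1))"
      by (rule Weierstrass_m_test'[OF _ M]) (use bound d(2) in auto)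
  qed simp
  thus "\<exists>d>0. cball z0 d \<subseteq> U \<and> uniform_limit (cball z0 d) (\<lambda>n z. \<Prod>i<n. f i z)
      (\<lambda>z. lim (\<lambda>n. \<Prod>i<n. f i z)) sequentially"
    using d uniformly_convergent_uniform_limit_iff by blast
qed

lemma Eomega_factor_bound:
  fixes w :: complex and a b A \<eta> :: real
  assumes a: "0 \<le> a" "a \<le> A" and b: "0 \<le> b" "b \<le> 1"
    and w: "Re w \<ge> - \<eta>" "norm w \<le> 3" and \<eta>: "0 \<le> \<eta>" "\<eta> * (A + A\<^sup>2 / 2) \<le> 1/4"
  shows "1 + of_real a * w + of_real (a\<^sup>2) * w / 2 \<noteq> 0"
    and "norm ((1 - of_real b * w + of_real (b\<^sup>2) * w / 2) / (1 + of_real a * w + of_real (a\<^sup>2) * w / 2) - 1)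
           \<le> 4 * (b + a * (1 + A / 2))"
proof -
  define c where "c = a + a\<^sup>2 / 2"
  have c0: "0 \<le> c" using a by (simp add: c_def)
  have "c \<le> A + A\<^sup>2 / 2" unfolding c_def using a by (intro add_mono power_mono divide_right_mono) auto
  hence "\<eta> * c \<le> 1/4" using order_trans[OF mult_left_mono[OF _ \<eta>(1)] \<eta>(2)] by blast
  moreover have "c * Re w \<ge> - \<eta> * c" using mult_left_mono[OF w(1) c0] by (simp add: mult.commute)
  ultimately have "Re (1 + of_real c * w) \<ge> 3/4" by simp
  hence nd: "norm (1 + of_real c * w) \<ge> 3/4" using complex_Re_le_cmod order_trans by blast
  have den: "1 + of_real a * w + of_real (a\<^sup>2) * w / 2 = 1 + of_real c * w"
    by (simp add: c_def algebra_simps)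
  show "1 + of_real a * w + of_real (a\<^sup>2) * w / 2 \<noteq> 0" unfolding den using nd by auto
  define d where "d = b - b\<^sup>2 / 2 + c"
  have "b\<^sup>2 \<le> b" using b by (simp add: power2_eq_square mult_left_le_one_le)
  hence d0: "0 \<le> d" using b c0 by (simp add: d_def)
  have "a\<^sup>2 \<le> a * A" using a by (simp add: power2_eq_square mult_left_mono)
  moreover have "a * (1 + A / 2) = a + a * A / 2" by (simp add: algebra_simps)
  ultimately have dle: "d \<le> b + a * (1 + A / 2)" using zero_le_power2[of b] unfolding d_def c_def by linarith
  have "1 + of_real c * w \<noteq> 0" using nd by auto
  hence "(1 - of_real b * w + of_real (b\<^sup>2) * w / 2) / (1 + of_real c * w) - 1
      = ((1 - of_real b * w + of_real (b\<^sup>2) * w / 2) - (1 + of_real c * w)) / (1 + of_real c * w)"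
    by (metis diff_divide_distrib divide_self)
  also have "(1 - of_real b * w + of_real (b\<^sup>2) * w / 2) - (1 + of_real c * w) = - (of_real d * w)"
    by (simp add: d_def algebra_simps)
  finally have "(1 - of_real b * w + of_real (b\<^sup>2) * w / 2) / (1 + of_real c * w) - 1
      = - (of_real d * w) / (1 + of_real c * w)" .
  hence "norm ((1 - of_real b * w + of_real (b\<^sup>2) * w / 2) / (1 + of_real c * w) - 1)
      = d * norm w / norm (1 + of_real c * w)"
    using d0 by (simp add: norm_divide norm_mult)
  also have "\<dots> \<le> d * 3 / (3/4)"
    using nd w(2) d0 by (intro frac_le mult_left_mono) auto
  also have "\<dots> \<le> 4 * (b + a * (1 + A / 2))" using dle by simp
  finally show "norm ((1 - of_real b * w + of_real (b\<^sup>2) * w / 2) / (1 + of_real a * w + of_real (a\<^sup>2) * w / 2) - 1)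
      \<le> 4 * (b + a * (1 + A / 2))" unfolding den .
qed

lemma lim_prod_of_real:
  fixes r :: "nat \<Rightarrow> real"
  assumes "summable (\<lambda>i. norm (r i - 1))"
  shows "lim (\<lambda>n. \<Prod>i<n. (of_real (r i) :: complex)) = of_real (prodinf r)"
proof -
  have "convergent_prod r"
    using assms by (intro abs_convergent_prod_imp_convergent_prod summable_imp_abs_convergent_prod)
  hence "(\<lambda>n. \<Prod>i<n. r i) \<longlonglongrightarrow> prodinf r"
    using convergent_prod_LIMSEQ LIMSEQ_lessThan_iff_atMost by blast
  hence "(\<lambda>n. \<Prod>i<n. (of_real (r i) :: complex)) \<longlonglongrightarrow> of_real (prodinf r)"
    by (simp flip: of_real_prod add: tendsto_of_real)
  thus ?thesis by (rule limI)
qed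

definition Eomega_factor :: "(nat \<Rightarrow> real) \<Rightarrow> (nat \<Rightarrow> real) \<Rightarrow> nat \<Rightarrow> complex \<Rightarrow> complex" where
  "Eomega_factor \<alpha> \<beta> i z = (1 - of_real (\<beta> i) * (1 - z) + of_real ((\<beta> i)\<^sup>2) * (1 - z) / 2)
      / (1 + of_real (\<alpha> i) * (1 - z) + of_real ((\<alpha> i)\<^sup>2) * (1 - z) / 2)"

text \<open>Near \<open>[-1, 1]\<close> the \<open>i\<close>-th factor differs from \<open>1\<close> by \<open>O(\<alpha>\<^sub>i + \<beta>\<^sub>i)\<close>, which is summable.\<close>
lemma Eomega_factor_near_interval:
  assumes om: "in_Omega \<alpha> \<beta> \<delta>" and b0: "\<beta> 0 < 1"
  obtains U M where "nbhd_interval U" "summable M" "\<And>i. Eomega_factor \<alpha> \<beta> i holomorphic_on U"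
    "\<And>i z. z \<in> U \<Longrightarrow> norm (Eomega_factor \<alpha> \<beta> i z - 1) \<le> M i"
proof -
  have apos: "\<And>i. 0 \<le> \<alpha> i" and bpos: "\<And>i. 0 \<le> \<beta> i" and sm: "summable (\<lambda>i. \<alpha> i + \<beta> i)"
    and "decseq \<alpha>" "decseq \<beta>"
    using om by (auto simp: in_Omega_def intro: decseq_SucI)
  define A where "A = \<alpha> 0"
  have aA: "\<alpha> i \<le> A" for i unfolding A_def using decseqD[OF \<open>decseq \<alpha>\<close>] by simp
  have b1: "\<beta> i \<le> 1" for i using decseqD[OF \<open>decseq \<beta>\<close>, of 0 i] b0 by simp
  have A0: "A \<ge> 0" using apos by (simp add: A_def)
  define \<epsilon> where "\<epsilon> = 1 / (4 * (1 + A + A\<^sup>2))"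
  have e0: "\<epsilon> > 0" using A0 by (simp add: \<epsilon>_def add_pos_nonneg)
  have eA: "\<epsilon> * (A + A\<^sup>2 / 2) \<le> 1/4" using A0 by (simp add: \<epsilon>_def field_simps add_pos_nonneg)
  define U where "U = ball 1 3 \<inter> {z. Re z < 1 + \<epsilon>}"
  define M where "M i = (4 + 2 * A) * (\<alpha> i + \<beta> i)" for i
  have bnd: "1 + of_real (\<alpha> i) * (1 - z) + of_real ((\<alpha> i)\<^sup>2) * (1 - z) / 2 \<noteq> 0"
      "norm (Eomega_factor \<alpha> \<beta> i z - 1) \<le> M i" if z: "z \<in> U" for z i
  proof -
    have "Re (1 - z) \<ge> - \<epsilon>" "norm (1 - z) \<le> 3" using z by (auto simp: U_def dist_norm)
    note fb = Eomega_factor_bound[OF apos[of i] aA[of i] bpos[of i] b1[of i] this less_imp_le[OF e0] eA]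
    show "1 + of_real (\<alpha> i) * (1 - z) + of_real ((\<alpha> i)\<^sup>2) * (1 - z) / 2 \<noteq> 0" by (rule fb(1))
    have "4 * (\<beta> i + \<alpha> i * (1 + A / 2)) \<le> M i"
      using apos[of i] bpos[of i] A0 by (simp add: M_def algebra_simps)
    thus "norm (Eomega_factor \<alpha> \<beta> i z - 1) \<le> M i" using fb(2) unfolding Eomega_factor_def by linarith
  qed
  show ?thesis
  proof (rule that[OF _ _ _ bnd(2)])
    have "norm (1 - of_real x :: complex) = \<bar>1 - x\<bar>" for x by (metis norm_of_real of_real_1 of_real_diff)
    thus "nbhd_interval U" using e0 by (auto simp: nbhd_interval_def U_def dist_norm open_Int open_halfspace_Re_lt)
    show "summable M" unfolding M_def by (intro summable_mult sm)
    show "Eomega_factor \<alpha> \<beta> i holomorphic_on U" for i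
      unfolding Eomega_factor_def[abs_def] using bnd(1) by (intro holomorphic_intros) auto
  qed
qed

lemma Eomega_holomorphic_extension:
  assumes "in_Omega \<alpha> \<beta> \<delta>" "\<beta> 0 < 1"
  obtains U F where "nbhd_interval U" "F holomorphic_on U"
    "\<And>x. of_real x \<in> U \<Longrightarrow> F (of_real x) = of_real (Eomega \<alpha> \<beta> \<delta> x)"
proof -
  obtain U M where U: "nbhd_interval U" and M: "summable M"
    and hol: "\<And>i. Eomega_factor \<alpha> \<beta> i holomorphic_on U"
    and bnd: "\<And>i z. z \<in> U \<Longrightarrow> norm (Eomega_factor \<alpha> \<beta> i z - 1) \<le> M i"
    using Eomega_factor_near_interval[OF assms] by blast
  define \<gamma> where "\<gamma> = \<delta> - (\<Sum>i. \<alpha> i + \<beta> i)"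
  show ?thesis
  proof (rule that[of U "\<lambda>z. exp (of_real \<gamma> * (z - 1)) * lim (\<lambda>n. \<Prod>i<n. Eomega_factor \<alpha> \<beta> i z)"])
    show "(\<lambda>z. exp (of_real \<gamma> * (z - 1)) * lim (\<lambda>n. \<Prod>i<n. Eomega_factor \<alpha> \<beta> i z)) holomorphic_on U"
      using holomorphic_on_lim_prod[OF _ hol M bnd] U by (intro holomorphic_intros) (auto simp: nbhd_interval_def)
    fix x assume xU: "of_real x \<in> U"
    define r where "r = (\<lambda>i. (1 - \<beta> i * (1 - x) + (\<beta> i)\<^sup>2 * (1 - x) / 2)
        / (1 + \<alpha> i * (1 - x) + (\<alpha> i)\<^sup>2 * (1 - x) / 2))"
    have r: "Eomega_factor \<alpha> \<beta> i (of_real x) = of_real (r i)" for i by (simp add: Eomega_factor_def r_def)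
    have "norm (r i - 1) \<le> M i" for i
    proof -
      have "Eomega_factor \<alpha> \<beta> i (of_real x) - 1 = of_real (r i - 1)" by (simp add: r)
      thus ?thesis using bnd[OF xU, of i] by (simp only: norm_of_real real_norm_def)
    qed
    hence "lim (\<lambda>n. \<Prod>i<n. Eomega_factor \<alpha> \<beta> i (of_real x)) = of_real (prodinf r)"
      unfolding r by (intro lim_prod_of_real summable_comparison_test'[OF M, where N = 0]) simp
    thus "exp (of_real \<gamma> * (of_real x - 1)) * lim (\<lambda>n. \<Prod>i<n. Eomega_factor \<alpha> \<beta> i (of_real x))
        = of_real (Eomega \<alpha> \<beta> \<delta> x)"
      by (simp add: Eomega_def \<gamma>_def r_def Let_def flip: exp_of_real)
  qed (rule U)
qed

section \<open>The integral formulas\<close>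

lemma higher_deriv_of_real:
  fixes F :: "complex \<Rightarrow> complex" and f :: "real \<Rightarrow> real"
  assumes hol: "F holomorphic_on U" and U: "open U"
    and eq: "\<And>x. of_real x \<in> U \<Longrightarrow> F (of_real x) = of_real (f x)"
  shows "of_real x \<in> U \<Longrightarrow> (deriv ^^ j) F (of_real x) = of_real ((deriv ^^ j) f x)"
proof (induction j arbitrary: x)
  case (Suc j x)
  have I: "open {x. of_real x \<in> U}"
    using open_vimage[OF U continuous_on_of_real[OF continuous_on_id]] by (simp add: vimage_def)
  define D where "D = (deriv ^^ Suc j) F (of_real x)"
  have "((deriv ^^ j) F has_field_derivative D) (at (of_real x))"
    unfolding D_def by (rule has_field_derivative_higher_deriv[OF hol U Suc.prems])
  hence "((\<lambda>t. (deriv ^^ j) F (of_real t)) has_vector_derivative D) (at x within UNIV)"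
    by (rule has_vector_derivative_real_field)
  hence dv: "((\<lambda>t. of_real ((deriv ^^ j) f t)) has_vector_derivative D) (at x)"
    by (rule has_vector_derivative_transform_within_open[OF _ I]) (use Suc in simp_all)
  have "((\<lambda>t. Re (of_real ((deriv ^^ j) f t) :: complex)) has_vector_derivative Re D) (at x)"
    by (rule bounded_linear.has_vector_derivative[OF bounded_linear_Re dv])
  hence "((deriv ^^ j) f has_real_derivative Re D) (at x)"
    by (simp add: has_real_derivative_iff_has_vector_derivative)
  moreover have "((\<lambda>t. Im (of_real ((deriv ^^ j) f t) :: complex)) has_vector_derivative Im D) (at x)"
    by (rule bounded_linear.has_vector_derivative[OF bounded_linear_Im dv])
  hence "((\<lambda>t. 0::real) has_vector_derivative Im D) (at x)" by simp
  hence "Im D = 0" by (rule vector_derivative_unique_at[OF _ has_vector_derivative_const])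
  ultimately show ?case by (simp add: D_def DERIV_imp_deriv complex_eq_iff)
qed (use eq in simp)

lemma re_trace_mult_power:
  assumes "F (of_real x) = of_real (e x)"
  shows "re_trace (\<lambda>z. F z * (z - 1) ^ k) x = e x * (x - 1) ^ k"
  using assms by (simp add: re_trace_def flip: of_real_diff)

lemma jacobi_coeff_cong:
  assumes "\<And>x. x \<in> {-1..<1} \<Longrightarrow> g x = h x"
  shows "jacobi_coeff g b s = jacobi_coeff h b s"
  unfolding jacobi_coeff_def
  by (rule arg_cong[of _ _ "\<lambda>t. Wt b s / pi * t"], rule integral_spike[of "{1}"]) (use assms in auto)

lemma level_le:
  assumes "a = 1/2 \<or> a = -1/2" "is_level n1 a1" "2 * real n1 + a1 \<le> 2 * real N + a"
  shows "n1 \<le> N"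
  using assms by (auto simp: is_level_def)

lemma Psi_eq_jacobi_coeff_extension:
  assumes hol: "F holomorphic_on U" and U: "nbhd_interval U"
    and ext: "\<And>x. of_real x \<in> U \<Longrightarrow> F (of_real x) = of_real (E x)"
    and lev: "a = 1/2 \<or> a = -1/2" "is_level n1 a1" "2 * real n1 + a1 \<le> 2 * real N + a"
  shows "Psi E N a n1 a1 l s
       = jacobi_coeff (re_trace ((dquot 1 ^^ (N - n1)) (\<lambda>z. F z * (z - 1) ^ (N - l)))) a1 s"
proof (rule Psi_eq_jacobi_coeff_dquot[OF _ U _ lev])
  show "(\<lambda>z. F z * (z - 1) ^ (N - l)) holomorphic_on U" by (intro holomorphic_intros hol)
  fix z
  have "x \<in> {-1..1} \<Longrightarrow> E x * (x - 1) ^ (N - l) = re_trace (\<lambda>z. F z * (z - 1) ^ (N - l)) x" for x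
    using re_trace_mult_power[of F x E, OF ext[OF nbhd_interval_of_real[OF U]]] by simp
  thus "PsiTop E N a l z = jacobi_coeff (re_trace (\<lambda>z. F z * (z - 1) ^ (N - l))) a z"
    unfolding PsiTop_def jacobi_coeff_def by (intro arg_cong[of _ _ "\<lambda>t. Wt a z / pi * t"] integral_cong)
      (simp add: mult_ac)
qed

lemma Psi_eq_moment_integral:
  assumes hol: "F holomorphic_on U" and U: "nbhd_interval U"
    and ext: "\<And>x. of_real x \<in> U \<Longrightarrow> F (of_real x) = of_real (E x)"
    and lev: "a = 1/2 \<or> a = -1/2" "is_level n1 a1" "2 * real n1 + a1 \<le> 2 * real N + a"
    and l: "l \<le> n1"
  shows "Psi E N a n1 a1 l s = Wt a1 s / pi *
     integral {-1..1} (\<lambda>x. E x * Jac a1 s x * (x - 1) ^ (n1 - l) * (1 - x) powr a1 * (1 + x) powr (-1/2))"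
proof -
  have "F field_differentiable (at 1)"
    using holomorphic_on_imp_differentiable_at[OF hol] nbhd_interval_one[OF U] U
    by (simp add: nbhd_interval_def)
  from dquot_iterate_mult_power[OF this, of "N - n1" "n1 - l"]
  have "(dquot 1 ^^ (N - n1)) (\<lambda>z. F z * (z - 1) ^ (N - l)) = (\<lambda>z. F z * (z - 1) ^ (n1 - l))"
    using l level_le[OF lev] by (simp add: algebra_simps)
  hence "Psi E N a n1 a1 l s = jacobi_coeff (re_trace (\<lambda>z. F z * (z - 1) ^ (n1 - l))) a1 s"
    by (simp add: Psi_eq_jacobi_coeff_extension[OF hol U ext lev])
  also have "\<dots> = jacobi_coeff (\<lambda>x. E x * (x - 1) ^ (n1 - l)) a1 s"
    by (rule jacobi_coeff_cong)
       (use re_trace_mult_power[of F _ E, OF ext[OF nbhd_interval_of_real[OF U]]] in auto)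
  finally show ?thesis by (simp add: jacobi_coeff_def mult_ac)
qed

lemma Psi_eq_taylor_remainder_integral:
  assumes hol: "F holomorphic_on U" and U: "nbhd_interval U"
    and ext: "\<And>x. of_real x \<in> U \<Longrightarrow> F (of_real x) = of_real (E x)"
    and lev: "a = 1/2 \<or> a = -1/2" "is_level n1 a1" "2 * real n1 + a1 \<le> 2 * real N + a"
    and l: "n1 < l" "l \<le> N"
  shows "Psi E N a n1 a1 l s = Wt a1 s / pi *
     integral {-1..1} (\<lambda>x. (E x - (\<Sum>j<l - n1. (deriv ^^ j) E 1 / fact j * (x - 1) ^ j)) / (x - 1) ^ (l - n1)
       * Jac a1 s x * (1 - x) powr a1 * (1 + x) powr (-1/2))"
proof -
  have oU: "open U" and U1: "1 \<in> U" using U nbhd_interval_one by (auto simp: nbhd_interval_def)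
  have "N - n1 = (l - n1) + (N - l)" using l by simp
  hence "(dquot 1 ^^ (N - n1)) (\<lambda>z. F z * (z - 1) ^ (N - l))
      = (dquot 1 ^^ (l - n1)) ((dquot 1 ^^ (N - l)) (\<lambda>z. F z * (z - 1) ^ (0 + (N - l))))"
    by (simp only: funpow_add o_apply add_0)
  also have "(dquot 1 ^^ (N - l)) (\<lambda>z. F z * (z - 1) ^ (0 + (N - l))) = F"
    using dquot_iterate_mult_power[OF holomorphic_on_imp_differentiable_at[OF hol oU U1],
        where j = "N - l" and m = 0] by simp
  finally have "Psi E N a n1 a1 l s = jacobi_coeff (re_trace ((dquot 1 ^^ (l - n1)) F)) a1 s"
    by (simp add: Psi_eq_jacobi_coeff_extension[OF hol U ext lev])
  also have "\<dots> = jacobi_coeff (\<lambda>x. (E x - (\<Sum>j<l - n1. (deriv ^^ j) E 1 / fact j * (x - 1) ^ j))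
      / (x - 1) ^ (l - n1)) a1 s"
  proof (rule jacobi_coeff_cong)
    fix x :: real assume x: "x \<in> {-1..<1}"
    have "(dquot 1 ^^ j) F 1 = of_real ((deriv ^^ j) E 1 / fact j)" for j
      using dquot_iterate_at[OF hol oU U1, of j] higher_deriv_of_real[OF hol oU ext, of 1 j] U1 by simp
    moreover have "of_real x \<noteq> (1::complex)" using x by simp
    ultimately have "(dquot 1 ^^ (l - n1)) F (of_real x)
        = of_real ((E x - (\<Sum>j<l - n1. (deriv ^^ j) E 1 / fact j * (x - 1) ^ j)) / (x - 1) ^ (l - n1))"
      using ext[OF nbhd_interval_of_real[OF U]] x by (simp add: dquot_iterate_eq)
    thus "re_trace ((dquot 1 ^^ (l - n1)) F) x
        = (E x - (\<Sum>j<l - n1. (deriv ^^ j) E 1 / fact j * (x - 1) ^ j)) / (x - 1) ^ (l - n1)"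
      by (simp only: re_trace_def Re_complex_of_real)
  qed
  finally show ?thesis by (simp add: jacobi_coeff_def mult_ac)
qed

theorem theorem4p4:
  fixes \<alpha> \<beta> :: "nat \<Rightarrow> real" and \<delta> :: real and N :: nat and a :: real
    and n1 :: nat and a1 :: real
  assumes "in_Omega \<alpha> \<beta> \<delta>"
    and "\<beta> 0 < 1"
    and "N \<ge> 1" and "a = 1/2 \<or> a = -1/2"
    and "is_level n1 a1"
    and "2 * real n1 + a1 \<le> 2 * real N + a"
  shows "(\<forall>l s. 1 \<le> l \<and> l \<le> n1 \<longrightarrow>
            Psi (Eomega \<alpha> \<beta> \<delta>) N a n1 a1 l s =
              Wt a1 s / pi *
              integral {-1..1} (\<lambda>x. Eomega \<alpha> \<beta> \<delta> x * Jac a1 s x * (x - 1) ^ (n1 - l)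
                                      * (1 - x) powr a1 * (1 + x) powr (-1/2)))
       \<and> (\<forall>l s. n1 < l \<and> l \<le> N \<longrightarrow>
            Psi (Eomega \<alpha> \<beta> \<delta>) N a n1 a1 l s =
              Wt a1 s / pi *
              integral {-1..1} (\<lambda>x.
                 (Eomega \<alpha> \<beta> \<delta> x
                   - (\<Sum>j<l - n1. (deriv ^^ j) (Eomega \<alpha> \<beta> \<delta>) 1 / fact j * (x - 1) ^ j))
                 / (x - 1) ^ (l - n1)
                 * Jac a1 s x * (1 - x) powr a1 * (1 + x) powr (-1/2)))"
proof -
  obtain U F where U: "nbhd_interval U" and hol: "F holomorphic_on U"
    and ext: "\<And>x. of_real x \<in> U \<Longrightarrow> F (of_real x) = of_real (Eomega \<alpha> \<beta> \<delta> x)"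
    using Eomega_holomorphic_extension[OF assms(1,2)] by blast
  show ?thesis
    using Psi_eq_moment_integral[OF hol U ext assms(4-6)]
      Psi_eq_taylor_remainder_integral[OF hol U ext assms(4-6)] by blast
qed
end
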